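(* Let $(\{(l_1,w_1),\ldots,(l_{|N|},w_{|N|})\}, l_{\mathrm{bin}})$ be nonnegative integers with $0<l_k\le l_{\mathrm{bin}}$, and let $(N,v)$ be the greedy knapsack budgeted game with $v(S)=w(\mathcal A'(S))$ for all $S\subseteq N$, where $\mathcal A'$ is the greedy heuristic described in the context. Then the Shapley value $\phi_i(v)$ of any given agent $i$ can be computed in time $O\big(l_{\mathrm{bin}}^5\, w_{\max}^5\, |N|^8\big)$, where $w_{\max}=\lceil l_{\mathrm{bin}}\cdot \max_k w_k/l_k\rceil$.
   Context: A cooperative game $(N,v)$ consists of a finite set $N$ of agents and a function $v:2^N\to\mathbb R$ with $v(\emptyset)=0$. The Shapley value of agent $i$ is $\phi_i(v)=\sum_{S\subseteq N\setminus\{i\}}\frac{|S|!\,(|N|-|S|-1)!}{|N|!}\big(v(S\cup\{i\})-v(S)\big)$. Write $w(S)=\sum_{k\in S}w_k$, $l(S)=\sum_{k\in S}l_k$. Fix a linear order on $N$ (agents labeled $1,\ldots,|N|$) such that $w_1/l_1\ge w_2/l_2\ge\cdots\ge w_{|N|}/l_{|N|}$. The greedy heuristic $\mathcal A'(S)$ for $S\subseteq N$ nonempty: (1) let $a$ be the agent of $S$ with maximum $w_a$, ties broken by lowest index; (2) go through the agents of $S$ in increasing index order (i.e. decreasing $w_k/l_k$), adding each to a set $S'$ while the total length stays at most $l_{\mathrm{bin}}$, and stop at the first agent that does not fit; (3) return $S'$ if $w(S')\ge w_a$, and $\{a\}$ otherwise. Set $\mathcal A'(\emptyset)=\emptyset$.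 Running times count arithmetic operations at unit cost. *)

theory Defs
  imports Complex_Main
begin

definition shapley :: "nat set \<Rightarrow> (nat set \<Rightarrow> real) \<Rightarrow> nat \<Rightarrow> real" where
  "shapley N v i = (\<Sum>S\<in>Pow (N - {i}).
      (fact (card S) * fact (card N - card S - 1) / fact (card N)) * (v (S \<union> {i}) - v S))"

fun take_fit :: "(nat \<Rightarrow> nat) \<Rightarrow> nat \<Rightarrow> nat list \<Rightarrow> nat list" where
  "take_fit l b [] = []"
| "take_fit l b (k # ks) = (if l k \<le> b then k # take_fit l (b - l k) ks else [])"

definition max_agent :: "(nat \<Rightarrow> nat) \<Rightarrow> nat set \<Rightarrow> nat" where
  "max_agent w S = Min {k \<in> S. w k = Max (w ` S)}"

definition greedy :: "(nat \<Rightarrow> nat) \<Rightarrow> (nat \<Rightarrow> nat) \<Rightarrow> nat \<Rightarrow> nat set \<Rightarrow> nat set" where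
  "greedy l w lbin S =
     (if S = {} then {}
      else (let S' = set (take_fit l lbin (sorted_list_of_set S));
                a = max_agent w S
            in if sum w S' \<ge> w a then S' else {a}))"

definition greedy_game :: "(nat \<Rightarrow> nat) \<Rightarrow> (nat \<Rightarrow> nat) \<Rightarrow> nat \<Rightarrow> nat set \<Rightarrow> real" where
  "greedy_game l w lbin S = real (sum w (greedy l w lbin S))"

definition wmax :: "nat \<Rightarrow> (nat \<Rightarrow> nat) \<Rightarrow> (nat \<Rightarrow> nat) \<Rightarrow> nat \<Rightarrow> nat" where
  "wmax n l w lbin = nat \<lceil>real lbin * Max ((\<lambda>k. real (w k) / real (l k)) ` {1..n})\<rceil>"

text \<open>Memory is an infinite array of integer registers; every instruction costs one step.\<close>
datatype instr =
    LoadConst nat int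
  | Add nat nat nat
  | Sub nat nat nat
  | Mul nat nat nat
  | Div nat nat nat
  | Load nat nat
  | Store nat nat
  | Jz nat nat
  | Jneg nat nat
  | Jmp nat                    \<comment> \<open>goto t (t \<ge> length of program halts)\<close>

type_synonym config = "nat \<times> (nat \<Rightarrow> int)"

fun exec_instr :: "instr \<Rightarrow> config \<Rightarrow> config" where
  "exec_instr (LoadConst d c) (pc, m) = (Suc pc, m(d := c))"
| "exec_instr (Add d a b) (pc, m) = (Suc pc, m(d := m a + m b))"
| "exec_instr (Sub d a b) (pc, m) = (Suc pc, m(d := m a - m b))"
| "exec_instr (Mul d a b) (pc, m) = (Suc pc, m(d := m a * m b))"
| "exec_instr (Div d a b) (pc, m) = (Suc pc, m(d := m a div m b))"
| "exec_instr (Load d s) (pc, m) = (Suc pc, m(d := m (nat (m s))))"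
| "exec_instr (Store d s) (pc, m) = (Suc pc, m(nat (m d) := m s))"
| "exec_instr (Jz r t) (pc, m) = (if m r = 0 then t else Suc pc, m)"
| "exec_instr (Jneg r t) (pc, m) = (if m r < 0 then t else Suc pc, m)"
| "exec_instr (Jmp t) (pc, m) = (t, m)"

definition step :: "instr list \<Rightarrow> config \<Rightarrow> config" where
  "step P c = (if fst c < length P then exec_instr (P ! fst c) c else c)"

definition halted :: "instr list \<Rightarrow> config \<Rightarrow> bool" where
  "halted P c \<longleftrightarrow> fst c \<ge> length P"

definition runs_within :: "instr list \<Rightarrow> (nat \<Rightarrow> int) \<Rightarrow> nat \<Rightarrow> (nat \<Rightarrow> int) \<Rightarrow> bool" where
  "runs_within P m0 t m \<longleftrightarrow>
     (\<exists>t'\<le>t. halted P ((step P ^^ t') (0, m0)) \<and> snd ((step P ^^ t') (0, m0)) = m)"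

text \<open>Input encoding: m[0] = |N|, m[1] = l_bin, m[2] = i, and for k = 1..|N|:
  m[3 + 2(k-1)] = l_k, m[4 + 2(k-1)] = w_k; all other registers 0.\<close>
definition input_mem :: "nat \<Rightarrow> nat \<Rightarrow> (nat \<Rightarrow> nat) \<Rightarrow> (nat \<Rightarrow> nat) \<Rightarrow> nat \<Rightarrow> nat \<Rightarrow> int" where
  "input_mem n lbin l w i a =
     (if a = 0 then int n
      else if a = 1 then int lbin
      else if a = 2 then int i
      else if 3 \<le> a \<and> a < 3 + 2 * n then
        (if even (a - 3) then int (l ((a - 3) div 2 + 1)) else int (w ((a - 3) div 2 + 1)))
      else 0)"

definition outputs :: "(nat \<Rightarrow> int) \<Rightarrow> real \<Rightarrow> bool" where
  "outputs m x \<longleftrightarrow> m 1 \<noteq> 0 \<and> real_of_int (m 0) / real_of_int (m 1) = x"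

end

theory Submission
  imports Defs
begin

text \<open>
  Since \<open>A'\<close> scans the agents in index
  order and \<open>w(A'(S))\<close> is the larger of the packed weight and the largest weight of \<open>S\<close>,
  both sums can be accumulated by a dynamic program over the agents whose state consists of
  the coalition size, the remaining capacity, the packed weight, the largest weight so far,
  whether packing has stopped, and whether \<open>i\<close> has joined. Packed weights are bounded by
  \<open>w(N) \<le> n w_max\<close> and single weights by \<open>w_max\<close>, so the table has \<open>O(n\<^sup>3 l_bin w_max\<^sup>2)\<close> cells.
  A RAM program, written in a small structured language and compiled to jumps, fills each
  cell in constant time and outputs the difference of two cells over \<open>n!\<close>.
\<close>

section \<open>Structured programs for the RAM\<close>

datatype cond = CNeg nat | CZero nat

fun holds :: "cond \<Rightarrow> (nat \<Rightarrow> int) \<Rightarrow> bool" where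
  "holds (CNeg r) m = (m r < 0)"
| "holds (CZero r) m = (m r = 0)"

fun jump_if :: "cond \<Rightarrow> nat \<Rightarrow> instr" where
  "jump_if (CNeg r) t = Jneg r t"
| "jump_if (CZero r) t = Jz r t"

fun nonjump :: "instr \<Rightarrow> bool" where
  "nonjump (Jz _ _) = False"
| "nonjump (Jneg _ _) = False"
| "nonjump (Jmp _) = False"
| "nonjump _ = True"

definition exec_plain :: "instr \<Rightarrow> (nat \<Rightarrow> int) \<Rightarrow> (nat \<Rightarrow> int)" where
  "exec_plain ins m = snd (exec_instr ins (0, m))"

lemma exec_plain_simps[simp]:
  "exec_plain (LoadConst d c) m = m(d := c)"
  "exec_plain (Add d a b) m = m(d := m a + m b)"
  "exec_plain (Sub d a b) m = m(d := m a - m b)"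
  "exec_plain (Mul d a b) m = m(d := m a * m b)"
  "exec_plain (Div d a b) m = m(d := m a div m b)"
  "exec_plain (Load d s) m = m(d := m (nat (m s)))"
  "exec_plain (Store d s) m = m(nat (m d) := m s)"
  by (simp_all add: exec_plain_def)

lemma exec_instr_nonjump: "nonjump ins \<Longrightarrow> exec_instr ins (pc, m) = (Suc pc, exec_plain ins m)"
  by (cases ins) (auto simp: exec_plain_def)

lemma exec_jump_if: "exec_instr (jump_if c t) (pc, m) = (if holds c m then t else Suc pc, m)"
  by (cases c) auto

text \<open>\<open>Until c b\<close> tests \<open>c\<close> first and runs \<open>b\<close> again as long as \<open>c\<close> fails.\<close>
datatype com = Basic instr | Seq com com | Branch cond com com | Until cond com

fun code_size :: "com \<Rightarrow> nat" where
  "code_size (Basic ins) = 1"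
| "code_size (Seq a b) = code_size a + code_size b"
| "code_size (Branch c a b) = code_size a + code_size b + 2"
| "code_size (Until c b) = code_size b + 2"

text \<open>\<open>compile q c\<close> is the code of \<open>c\<close> when its first instruction sits at address \<open>q\<close>.\<close>
fun compile :: "nat \<Rightarrow> com \<Rightarrow> instr list" where
  "compile q (Basic ins) = [ins]"
| "compile q (Seq a b) = compile q a @ compile (q + code_size a) b"
| "compile q (Branch c a b) =
     [jump_if c (q + code_size b + 2)] @ compile (Suc q) b
     @ [Jmp (q + code_size b + 2 + code_size a)] @ compile (q + code_size b + 2) a"
| "compile q (Until c b) = [jump_if c (q + code_size b + 2)] @ compile (Suc q) b @ [Jmp q]"

lemma length_compile[simp]: "length (compile q c) = code_size c"
  by (induction c arbitrary: q) auto

text \<open>In \<open>exec_com c m m' t\<close>, \<open>t\<close> counts all RAM steps of the compiled code, jumps included.\<close>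
inductive exec_com :: "com \<Rightarrow> (nat \<Rightarrow> int) \<Rightarrow> (nat \<Rightarrow> int) \<Rightarrow> nat \<Rightarrow> bool" where
  exec_Basic: "nonjump ins \<Longrightarrow> exec_com (Basic ins) m (exec_plain ins m) 1"
| exec_Seq: "exec_com a m m1 t1 \<Longrightarrow> exec_com b m1 m2 t2 \<Longrightarrow> exec_com (Seq a b) m m2 (t1 + t2)"
| exec_BranchT: "holds c m \<Longrightarrow> exec_com a m m' t \<Longrightarrow> exec_com (Branch c a b) m m' (Suc t)"
| exec_BranchF: "\<not> holds c m \<Longrightarrow> exec_com b m m' t \<Longrightarrow> exec_com (Branch c a b) m m' (t + 2)"
| exec_UntilT: "holds c m \<Longrightarrow> exec_com (Until c b) m m 1"
| exec_UntilF: "\<not> holds c m \<Longrightarrow> exec_com b m m1 t1 \<Longrightarrow> exec_com (Until c b) m1 m2 t2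
    \<Longrightarrow> exec_com (Until c b) m m2 (t1 + t2 + 2)"

definition code_at :: "instr list \<Rightarrow> nat \<Rightarrow> com \<Rightarrow> bool" where
  "code_at P q c \<longleftrightarrow> q + code_size c \<le> length P \<and> (\<forall>j < code_size c. P ! (q + j) = compile q c ! j)"

lemma code_at_compile: "code_at (compile 0 c) 0 c"
  by (simp add: code_at_def)

lemma code_at_Seq:
  assumes "code_at P q (Seq a b)"
  shows "code_at P q a" "code_at P (q + code_size a) b"
proof -
  have L: "q + code_size a + code_size b \<le> length P"
    and E: "\<And>j. j < code_size a + code_size b \<Longrightarrow>
              P ! (q + j) = (compile q a @ compile (q + code_size a) b) ! j"
    using assms unfolding code_at_def by auto
  show "code_at P q a"
    unfolding code_at_def using L E by (auto simp: nth_append)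
  show "code_at P (q + code_size a) b"
    unfolding code_at_def using L E[of "code_size a + _"] by (auto simp: nth_append add.assoc)
qed

lemma code_at_Branch:
  assumes "code_at P q (Branch c a b)"
  shows "q < length P" "P ! q = jump_if c (q + code_size b + 2)" "code_at P (Suc q) b"
    "q + code_size b + 1 < length P"
    "P ! (q + code_size b + 1) = Jmp (q + code_size b + 2 + code_size a)"
    "code_at P (q + code_size b + 2) a"
proof -
  have L: "q + code_size a + code_size b + 2 \<le> length P"
    and E: "\<And>j. j < code_size a + code_size b + 2 \<Longrightarrow> P ! (q + j) = compile q (Branch c a b) ! j"
    using assms unfolding code_at_def by auto
  show "q < length P" "q + code_size b + 1 < length P" using L by auto
  show "P ! q = jump_if c (q + code_size b + 2)" using E[of 0] by simp
  show "P ! (q + code_size b + 1) = Jmp (q + code_size b + 2 + code_size a)"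
    using E[of "code_size b + 1"] by (simp add: nth_append)
  show "code_at P (Suc q) b"
    unfolding code_at_def using L E[of "Suc _"] by (auto simp: nth_append)
  show "code_at P (q + code_size b + 2) a"
    unfolding code_at_def using L E[of "code_size b + 2 + _"] by (auto simp: nth_append add.assoc)
qed

lemma code_at_Until:
  assumes "code_at P q (Until c b)"
  shows "q < length P" "P ! q = jump_if c (q + code_size b + 2)" "code_at P (Suc q) b"
    "q + code_size b + 1 < length P" "P ! (q + code_size b + 1) = Jmp q"
proof -
  have L: "q + code_size b + 2 \<le> length P"
    and E: "\<And>j. j < code_size b + 2 \<Longrightarrow> P ! (q + j) = compile q (Until c b) ! j"
    using assms unfolding code_at_def by auto
  show "q < length P" "q + code_size b + 1 < length P" using L by auto
  show "P ! q = jump_if c (q + code_size b + 2)" using E[of 0] by simp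
  show "P ! (q + code_size b + 1) = Jmp q" using E[of "code_size b + 1"] by (simp add: nth_append)
  show "code_at P (Suc q) b"
    unfolding code_at_def using L E[of "Suc _"] by (auto simp: nth_append)
qed

lemma funpow_add_apply: "(f ^^ (a + b)) x = (f ^^ b) ((f ^^ a) x)"
  by (simp add: funpow_add add.commute[of a b])

lemma funpow_Suc_apply: "(f ^^ Suc n) x = (f ^^ n) (f x)"
  by (simp add: funpow_Suc_right del: funpow.simps)

lemma funpow_add_2_apply: "(f ^^ (n + 2)) x = f ((f ^^ n) (f x))"
  by (simp add: funpow_swap1 numeral_2_eq_2)

theorem exec_com_steps:
  "exec_com c m m' t \<Longrightarrow> code_at P q c \<Longrightarrow> (step P ^^ t) (q, m) = (q + code_size c, m')"
proof (induction arbitrary: q rule: exec_com.induct)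
  case (exec_Basic ins m)
  then have "q < length P" "P ! q = ins" unfolding code_at_def by auto
  then show ?case using exec_Basic by (simp add: step_def exec_instr_nonjump)
next
  case (exec_Seq a m m1 t1 b m2 t2)
  note A = code_at_Seq[OF exec_Seq.prems]
  show ?case using exec_Seq.IH(1)[OF A(1)] exec_Seq.IH(2)[OF A(2)] by (simp add: funpow_add_apply add.assoc)
next
  case (exec_BranchT c m a m' t b)
  note A = code_at_Branch[OF exec_BranchT.prems]
  have "step P (q, m) = (q + code_size b + 2, m)"
    using A exec_BranchT.hyps by (simp add: step_def exec_jump_if)
  then have "(step P ^^ Suc t) (q, m) = (step P ^^ t) (q + code_size b + 2, m)"
    by (simp only: funpow_Suc_apply)
  then show ?case using exec_BranchT.IH[OF A(6)] by simp
next
  case (exec_BranchF c m b m' t a)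
  note A = code_at_Branch[OF exec_BranchF.prems]
  have "step P (q, m) = (Suc q, m)"
    using A exec_BranchF.hyps by (simp add: step_def exec_jump_if)
  then have "(step P ^^ (t + 2)) (q, m) = step P ((step P ^^ t) (Suc q, m))"
    by (simp only: funpow_add_2_apply)
  also have "(step P ^^ t) (Suc q, m) = (q + code_size b + 1, m')"
    using exec_BranchF.IH[OF A(3)] by simp
  also have "step P (q + code_size b + 1, m') = (q + code_size (Branch c a b), m')"
    using A by (simp add: step_def)
  finally show ?case .
next
  case (exec_UntilT c m b)
  then show ?case using code_at_Until[OF exec_UntilT.prems] by (simp add: step_def exec_jump_if)
next
  case (exec_UntilF c m b m1 t1 m2 t2)
  note A = code_at_Until[OF exec_UntilF.prems]
  have "step P (q, m) = (Suc q, m)"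
    using A exec_UntilF.hyps by (simp add: step_def exec_jump_if)
  moreover have "t1 + t2 + 2 = (t1 + 2) + t2" by simp
  ultimately have "(step P ^^ (t1 + t2 + 2)) (q, m) = (step P ^^ t2) (step P ((step P ^^ t1) (Suc q, m)))"
    by (simp only: funpow_add_apply[where a = "t1 + 2" and b = t2] funpow_add_2_apply)
  also have "(step P ^^ t1) (Suc q, m) = (q + code_size b + 1, m1)"
    using exec_UntilF.IH(1)[OF A(3)] by simp
  also have "step P (q + code_size b + 1, m1) = (q, m1)"
    using A by (simp add: step_def)
  also have "(step P ^^ t2) (q, m1) = (q + code_size (Until c b), m2)"
    using exec_UntilF.IH(2) exec_UntilF.prems by simp
  finally show ?case .
qed

corollary runs_within_compile:
  assumes "exec_com c m0 m t" "t \<le> T"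
  shows "runs_within (compile 0 c) m0 T m"
  using exec_com_steps[OF assms(1) code_at_compile] assms(2)
  unfolding runs_within_def halted_def by (intro exI[of _ t]) auto

section \<open>Weakest preconditions with running time\<close>

definition wp :: "com \<Rightarrow> (nat \<Rightarrow> int) \<Rightarrow> ((nat \<Rightarrow> int) \<Rightarrow> nat \<Rightarrow> bool) \<Rightarrow> bool" where
  "wp c m Q \<longleftrightarrow> (\<exists>m' t. exec_com c m m' t \<and> Q m' t)"

lemma wpI: "exec_com c m m' t \<Longrightarrow> Q m' t \<Longrightarrow> wp c m Q"
  unfolding wp_def by blast

lemma wpE: "wp c m Q \<Longrightarrow> (\<And>m' t. exec_com c m m' t \<Longrightarrow> Q m' t \<Longrightarrow> thesis) \<Longrightarrow> thesis"
  unfolding wp_def by blast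

lemma wp_mono: "wp c m Q \<Longrightarrow> (\<And>m' t. Q m' t \<Longrightarrow> Q' m' t) \<Longrightarrow> wp c m Q'"
  unfolding wp_def by blast

lemma wp_Basic: "nonjump ins \<Longrightarrow> wp (Basic ins) m Q = Q (exec_plain ins m) 1"
  unfolding wp_def by (blast intro: exec_Basic elim: exec_com.cases)

lemma wp_Seq: "wp (Seq a b) m Q = wp a m (\<lambda>m1 t1. wp b m1 (\<lambda>m2 t2. Q m2 (t1 + t2)))"
  unfolding wp_def by (auto intro: exec_Seq elim: exec_com.cases) (blast elim: exec_com.cases)

lemma wp_Branch:
  "wp (Branch c a b) m Q =
     (if holds c m then wp a m (\<lambda>m' t. Q m' (Suc t)) else wp b m (\<lambda>m' t. Q m' (t + 2)))"
proof (cases "holds c m")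
  case True
  have "exec_com (Branch c a b) m m' t \<longleftrightarrow> (\<exists>t'. t = Suc t' \<and> exec_com a m m' t')" for m' t
    using True by (auto intro: exec_BranchT elim: exec_com.cases)
  then show ?thesis using True unfolding wp_def by auto
next
  case False
  have "exec_com (Branch c a b) m m' t \<longleftrightarrow> (\<exists>t'. t = t' + 2 \<and> exec_com b m m' t')" for m' t
    using False by (auto dest: exec_BranchF[OF False, of b _ _ a] elim: exec_com.cases)
  then show ?thesis using False unfolding wp_def by auto
qed

text \<open>Loop rule: \<open>I j\<close> is the invariant with \<open>j\<close> iterations left, each costing at most \<open>K\<close>.\<close>
lemma wp_Until:
  assumes "I k m"
    and "\<And>m. I 0 m \<Longrightarrow> holds c m"
    and "\<And>j m. I (Suc j) m \<Longrightarrow> \<not> holds c m \<and> wp b m (\<lambda>m' t. I j m' \<and> t \<le> K)"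
    and "\<And>m' t. I 0 m' \<Longrightarrow> t \<le> k * (K + 2) + 1 \<Longrightarrow> Q m' t"
  shows "wp (Until c b) m Q"
proof -
  have "wp (Until c b) m (\<lambda>m' t. I 0 m' \<and> t \<le> k * (K + 2) + 1)"
    using assms(1)
  proof (induction k arbitrary: m)
    case 0
    then show ?case using assms(2) by (intro wpI[OF exec_UntilT]) auto
  next
    case (Suc k)
    from assms(3)[OF Suc.prems] obtain m1 t1
      where B: "\<not> holds c m" "exec_com b m m1 t1" "I k m1" "t1 \<le> K" by (blast elim: wpE)
    from Suc.IH[OF B(3)] obtain m2 t2
      where C: "exec_com (Until c b) m1 m2 t2" "I 0 m2" "t2 \<le> k * (K + 2) + 1" by (blast elim: wpE)
    show ?case using B C by (intro wpI[OF exec_UntilF[OF B(1,2) C(1)]]) auto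
  qed
  then show ?thesis using assms(4) by (rule wp_mono) auto
qed

definition agree_except :: "nat set \<Rightarrow> (nat \<Rightarrow> int) \<Rightarrow> (nat \<Rightarrow> int) \<Rightarrow> bool" where
  "agree_except W m' m \<longleftrightarrow> (\<forall>a. a \<notin> W \<longrightarrow> m' a = m a)"

section \<open>A dynamic program for the Shapley value\<close>

text \<open>The greedy heuristic as a left-to-right scan with state \<open>(b, pw, mw, fl)\<close>: remaining
  capacity, weight packed so far, largest weight seen, and whether packing has stopped.\<close>
fun greedy_step :: "(nat \<Rightarrow> nat) \<Rightarrow> (nat \<Rightarrow> nat) \<Rightarrow> nat \<Rightarrow> nat \<times> nat \<times> nat \<times> nat \<Rightarrow> nat \<times> nat \<times> nat \<times> nat" where
  "greedy_step l w k (b, pw, mw, fl) =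
     (if fl = 0 \<and> l k \<le> b then (b - l k, pw + w k, max mw (w k), 0) else (b, pw, max mw (w k), 1))"

definition greedy_scan :: "(nat \<Rightarrow> nat) \<Rightarrow> (nat \<Rightarrow> nat) \<Rightarrow> nat list \<Rightarrow> nat \<times> nat \<times> nat \<times> nat \<Rightarrow> nat \<times> nat \<times> nat \<times> nat" where
  "greedy_scan l w xs st = foldl (\<lambda>st k. greedy_step l w k st) st xs"

fun scan_value :: "nat \<times> nat \<times> nat \<times> nat \<Rightarrow> nat" where
  "scan_value (b, pw, mw, fl) = max pw mw"

lemma greedy_scan_Nil[simp]: "greedy_scan l w [] st = st"
  by (simp add: greedy_scan_def)

lemma greedy_scan_Cons[simp]: "greedy_scan l w (k # xs) st = greedy_scan l w xs (greedy_step l w k st)"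
  by (simp add: greedy_scan_def)

lemma greedy_scan_eq:
  "greedy_scan l w xs (b, pw, mw, fl) = (b', pw', mw', fl') \<Longrightarrow>
     pw' = pw + (if fl = 0 then sum_list (map w (take_fit l b xs)) else 0) \<and> mw' = Max (insert mw (w ` set xs))"
proof (induction xs arbitrary: b pw mw fl)
  case (Cons k xs)
  obtain b1 pw1 mw1 fl1 where st: "greedy_step l w k (b, pw, mw, fl) = (b1, pw1, mw1, fl1)"
    by (metis prod_cases4)
  then have scan: "greedy_scan l w xs (b1, pw1, mw1, fl1) = (b', pw', mw', fl')"
    using Cons.prems by simp
  have "Max (insert (max mw (w k)) (w ` set xs)) = Max (insert mw (w ` set (k # xs)))"
    using Max_insert[of "w ` set xs"]
    by (cases "xs = []") (auto simp: max.assoc max.commute max.left_commute insert_commute)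
  moreover have "mw1 = max mw (w k)" using st by (auto split: if_splits)
  ultimately show ?case
    using Cons.IH[OF scan] st by (auto split: if_splits)
qed auto

lemma take_fit_prefix: "\<exists>ys. xs = take_fit l b xs @ ys"
  by (induction xs arbitrary: b) auto

text \<open>\<open>A'(S)\<close> returns the heavier of \<open>S'\<close> and \<open>{a}\<close>, so its weight is \<open>max (w S') (w a)\<close>.\<close>
lemma greedy_scan_value:
  assumes "finite S"
  shows "scan_value (greedy_scan l w (sorted_list_of_set S) (lbin, 0, 0, 0)) = sum w (greedy l w lbin S)"
proof (cases "S = {}")
  case False
  define xs where "xs = sorted_list_of_set S"
  define tf where "tf = take_fit l lbin xs"
  obtain ys where "xs = tf @ ys" using take_fit_prefix unfolding tf_def by blast
  then have "distinct tf" using distinct_sorted_list_of_set[of S] unfolding xs_def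
    by (metis distinct_append)
  then have sum_tf: "sum w (set tf) = sum_list (map w tf)" by (simp add: sum_list_distinct_conv_sum_set)
  define a where "a = max_agent w S"
  have "Max (w ` S) \<in> w ` S" using assms False by simp
  then have "{k \<in> S. w k = Max (w ` S)} \<noteq> {}" by auto
  then have "a \<in> {k \<in> S. w k = Max (w ` S)}" unfolding a_def max_agent_def using assms by (intro Min_in) auto
  then have wa: "w a = Max (w ` S)" by simp
  obtain b' pw' mw' fl' where scan: "greedy_scan l w xs (lbin, 0, 0, 0) = (b', pw', mw', fl')"
    by (metis prod_cases4)
  then have "greedy_scan l w xs (lbin, 0, 0, 0) = (b', sum_list (map w tf), Max (insert 0 (w ` S)), fl')"
    using greedy_scan_eq[OF scan] assms unfolding tf_def xs_def by simp
  moreover have "Max (insert 0 (w ` S)) = Max (w ` S)" using assms False by (simp add: Max_insert)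
  ultimately show ?thesis
    unfolding greedy_def using False sum_tf wa by (simp add: Let_def tf_def xs_def a_def max_def)
qed (simp add: greedy_def)

text \<open>The table stores packed weights up to \<open>PW\<close> only; from the initial state with
  \<open>PW = w(N)\<close> the cap never binds (\<open>capped_step_eq\<close>).\<close>
fun capped_step :: "nat \<Rightarrow> (nat \<Rightarrow> nat) \<Rightarrow> (nat \<Rightarrow> nat) \<Rightarrow> nat \<Rightarrow> nat \<times> nat \<times> nat \<times> nat \<Rightarrow> nat \<times> nat \<times> nat \<times> nat" where
  "capped_step PW l w k (b, pw, mw, fl) =
     (if fl = 0 \<and> l k \<le> b then (b - l k, min (pw + w k) PW, max mw (w k), 0) else (b, pw, max mw (w k), 1))"

lemma capped_step_eq: "pw + w k \<le> PW \<Longrightarrow> capped_step PW l w k (b, pw, mw, fl) = greedy_step l w k (b, pw, mw, fl)"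
  by simp

text \<open>\<open>shapley_dp n l w i PW d s st md\<close> scans the agents \<open>n - d + 1, \<dots>, n\<close>; every agent other
  than \<open>i\<close> is either left out or joins the coalition (raising its size \<open>s\<close>), while \<open>i\<close> joins
  exactly when \<open>md = 1\<close>. At the end the scan value is weighted by the Shapley coefficient
  \<open>s! (n - 1 - s)!\<close>; the cap at \<open>n\<close> on \<open>s\<close> keeps states finite and never binds.\<close>
fun shapley_dp :: "nat \<Rightarrow> (nat \<Rightarrow> nat) \<Rightarrow> (nat \<Rightarrow> nat) \<Rightarrow> nat \<Rightarrow> nat \<Rightarrow> nat \<Rightarrow> nat \<Rightarrow> nat \<times> nat \<times> nat \<times> nat \<Rightarrow> nat \<Rightarrow> nat" where
  "shapley_dp n l w i PW 0 s st md = fact s * fact (n - 1 - s) * scan_value st"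
| "shapley_dp n l w i PW (Suc d) s st md =
     (let k = n - d; st' = capped_step PW l w k st in
      if k = i then (if md = 1 then shapley_dp n l w i PW d s st' md else shapley_dp n l w i PW d s st md)
      else shapley_dp n l w i PW d s st md + shapley_dp n l w i PW d (min (s + 1) n) st' md)"

definition dp_summand :: "nat \<Rightarrow> (nat \<Rightarrow> nat) \<Rightarrow> (nat \<Rightarrow> nat) \<Rightarrow> nat \<Rightarrow> nat \<Rightarrow> nat set \<Rightarrow> nat \<Rightarrow> nat \<times> nat \<times> nat \<times> nat \<Rightarrow> nat set \<Rightarrow> nat" where
  "dp_summand n l w i md A s st T =
     fact (s + card T) * fact (n - 1 - (s + card T))
     * scan_value (greedy_scan l w (sorted_list_of_set (if md = 1 \<and> i \<in> A then insert i T else T)) st)"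

lemma sorted_list_of_set_insert_less:
  assumes "finite T" "\<forall>x\<in>T. k < x"
  shows "sorted_list_of_set (insert k T) = k # sorted_list_of_set T"
proof -
  have "Min (insert k T) = k" using assms by (auto intro!: Min_eqI)
  moreover have "insert k T - {k} = T" using assms by auto
  ultimately show ?thesis using sorted_list_of_set_nonempty[of "insert k T"] assms by simp
qed

lemma dp_summand_insert_agent:
  assumes "finite A" "\<forall>x\<in>A. k < x" "k \<noteq> i" "T \<subseteq> A"
  shows "dp_summand n l w i md (insert k A) s st (insert k T) = dp_summand n l w i md A (s + 1) (greedy_step l w k st) T"
proof -
  let ?U = "if md = 1 \<and> i \<in> A then insert i T else T"
  have fin: "finite T" using assms(1,4) finite_subset by blast
  have U: "(if md = 1 \<and> i \<in> insert k A then insert i (insert k T) else insert k T) = insert k ?U"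
    using assms(3) by auto
  have "?U \<subseteq> A" using assms(4) by auto
  then have "sorted_list_of_set (insert k ?U) = k # sorted_list_of_set ?U"
    using assms(1,2) finite_subset by (intro sorted_list_of_set_insert_less) auto
  moreover have "k \<notin> T" using assms by auto
  ultimately show ?thesis using fin unfolding dp_summand_def U by simp
qed

lemma dp_summand_insert_player:
  assumes "finite A" "\<forall>x\<in>A. i < x" "T \<subseteq> A"
  shows "dp_summand n l w i 1 (insert i A) s st T = dp_summand n l w i 1 A s (greedy_step l w i st) T"
proof -
  have "i \<notin> A" using assms by auto
  then have U: "(if (1::nat) = 1 \<and> i \<in> insert i A then insert i T else T) = insert i T"
    "(if (1::nat) = 1 \<and> i \<in> A then insert i T else T) = T" by auto
  have "sorted_list_of_set (insert i T) = i # sorted_list_of_set T"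
    using assms finite_subset by (intro sorted_list_of_set_insert_less) auto
  then show ?thesis unfolding dp_summand_def U by simp
qed

lemma sum_Pow_insert:
  fixes f :: "'a set \<Rightarrow> 'b::comm_monoid_add"
  assumes "finite B" "k \<notin> B"
  shows "sum f (Pow (insert k B)) = sum f (Pow B) + sum (\<lambda>T. f (insert k T)) (Pow B)"
proof -
  have "sum f (Pow (insert k B)) = sum f (Pow B) + sum f (insert k ` Pow B)"
    unfolding Pow_insert by (rule sum.union_disjoint) (use assms in auto)
  also have "sum f (insert k ` Pow B) = sum (\<lambda>T. f (insert k T)) (Pow B)"
    by (rule sum.reindex_cong[where l="insert k"]) (use assms in \<open>auto simp: inj_on_def\<close>)
  finally show ?thesis .
qed

lemma dp_summand_insert_skip:
  "k \<noteq> i \<or> md = 0 \<Longrightarrow> dp_summand n l w i md (insert k A) s st T = dp_summand n l w i md A s st T"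
  unfolding dp_summand_def by auto

lemma sum_dp_summand_insert_agent:
  assumes "finite A" "\<forall>x\<in>A. k < x" "k \<noteq> i"
  shows "(\<Sum>T\<in>Pow (insert k A - {i}). dp_summand n l w i md (insert k A) s st T) =
    (\<Sum>T\<in>Pow (A - {i}). dp_summand n l w i md A s st T)
    + (\<Sum>T\<in>Pow (A - {i}). dp_summand n l w i md A (s + 1) (greedy_step l w k st) T)"
proof -
  have "insert k A - {i} = insert k (A - {i})" "k \<notin> A - {i}" using assms by auto
  then have "(\<Sum>T\<in>Pow (insert k A - {i}). dp_summand n l w i md (insert k A) s st T) =
      (\<Sum>T\<in>Pow (A - {i}). dp_summand n l w i md (insert k A) s st T)
      + (\<Sum>T\<in>Pow (A - {i}). dp_summand n l w i md (insert k A) s st (insert k T))"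
    using assms(1) by (simp add: sum_Pow_insert)
  also have "\<dots> = (\<Sum>T\<in>Pow (A - {i}). dp_summand n l w i md A s st T)
      + (\<Sum>T\<in>Pow (A - {i}). dp_summand n l w i md A (s + 1) (greedy_step l w k st) T)"
  proof -
    have "dp_summand n l w i md (insert k A) s st (insert k T) =
        dp_summand n l w i md A (s + 1) (greedy_step l w k st) T" if "T \<in> Pow (A - {i})" for T
      using that by (intro dp_summand_insert_agent[OF assms]) auto
    then show ?thesis using assms(3) dp_summand_insert_skip[of k i md]
      by (intro arg_cong2[where f = "(+)"] sum.cong) auto
  qed
  finally show ?thesis .
qed

lemma sum_dp_summand_insert_player:
  assumes "finite A" "\<forall>x\<in>A. i < x" "md \<le> 1"
  shows "(\<Sum>T\<in>Pow (insert i A - {i}). dp_summand n l w i md (insert i A) s st T) =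
    (if md = 1 then \<Sum>T\<in>Pow A. dp_summand n l w i md A s (greedy_step l w i st) T
     else \<Sum>T\<in>Pow A. dp_summand n l w i md A s st T)"
proof -
  have A: "insert i A - {i} = A" using assms(2) by auto
  show ?thesis
  proof (cases "md = 1")
    case True
    then show ?thesis using A dp_summand_insert_player[OF assms(1,2)] by (auto intro: sum.cong)
  next
    case False
    then have "md = 0" using assms(3) by simp
    then show ?thesis using A dp_summand_insert_skip[of i i md] by simp
  qed
qed

theorem shapley_dp_sum:
  assumes "s + d \<le> n" "pw + sum w {n - d<..n} \<le> PW" "md \<le> 1"
  shows "shapley_dp n l w i PW d s (b, pw, mw, fl) md =
    (\<Sum>T\<in>Pow ({n - d<..n} - {i}). dp_summand n l w i md {n - d<..n} s (b, pw, mw, fl) T)"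
  using assms(1,2)
proof (induction d arbitrary: s b pw mw fl)
  case 0
  then show ?case by (simp add: dp_summand_def)
next
  case (Suc d)
  define k where "k = n - d"
  define A where "A = {n - d<..n}"
  have A_Suc: "{n - Suc d<..n} = insert k A" using Suc.prems unfolding k_def A_def by auto
  have A_gt: "finite A" "\<forall>x\<in>A. k < x" unfolding k_def A_def by auto
  obtain b' pw' mw' fl' where st': "greedy_step l w k (b, pw, mw, fl) = (b', pw', mw', fl')"
    by (metis prod_cases4)
  have "sum w (insert k A) = w k + sum w A" using A_gt by (intro sum.insert) auto
  then have fits: "pw + w k \<le> PW" "pw + sum w A \<le> PW" "pw' + sum w A \<le> PW"
    using Suc.prems st' unfolding A_Suc by (auto split: if_splits)
  have step: "capped_step PW l w k (b, pw, mw, fl) = (b', pw', mw', fl')"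
    using capped_step_eq[of pw w k PW, OF fits(1)] st' by simp
  have IH: "\<And>s b pw mw fl. s + d \<le> n \<Longrightarrow> pw + sum w A \<le> PW \<Longrightarrow>
      shapley_dp n l w i PW d s (b, pw, mw, fl) md = (\<Sum>T\<in>Pow (A - {i}). dp_summand n l w i md A s (b, pw, mw, fl) T)"
    using Suc.IH unfolding A_def by blast
  have s: "s + d \<le> n" "s + 1 + d \<le> n" "min (s + 1) n = s + 1" using Suc.prems by auto
  show ?case
  proof (cases "k = i")
    case True
    have "A - {i} = A" using A_gt True by auto
    have "shapley_dp n l w i PW (Suc d) s (b, pw, mw, fl) md =
        (if md = 1 then shapley_dp n l w i PW d s (b', pw', mw', fl') md else shapley_dp n l w i PW d s (b, pw, mw, fl) md)"
      using True step by (simp add: k_def[symmetric] Let_def)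
    also have "\<dots> = (if md = 1 then \<Sum>T\<in>Pow A. dp_summand n l w i md A s (b', pw', mw', fl') T
        else \<Sum>T\<in>Pow A. dp_summand n l w i md A s (b, pw, mw, fl) T)"
      by (simp only: IH[OF s(1) fits(3)] IH[OF s(1) fits(2)] \<open>A - {i} = A\<close>)
    also have "\<dots> = (\<Sum>T\<in>Pow ({n - Suc d<..n} - {i}). dp_summand n l w i md {n - Suc d<..n} s (b, pw, mw, fl) T)"
      using sum_dp_summand_insert_player[OF A_gt[unfolded True] assms(3), of n l w s "(b, pw, mw, fl)"] st' True
      unfolding A_Suc by simp
    finally show ?thesis .
  next
    case False
    have "shapley_dp n l w i PW (Suc d) s (b, pw, mw, fl) md =
        shapley_dp n l w i PW d s (b, pw, mw, fl) md + shapley_dp n l w i PW d (s + 1) (b', pw', mw', fl') md"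
      using False step s(3) by (simp add: k_def[symmetric] Let_def)
    also have "\<dots> = (\<Sum>T\<in>Pow ({n - Suc d<..n} - {i}). dp_summand n l w i md {n - Suc d<..n} s (b, pw, mw, fl) T)"
      using IH[OF s(1) fits(2)] IH[OF s(2) fits(3)] sum_dp_summand_insert_agent[OF A_gt False, of n l w md s "(b, pw, mw, fl)"] st'
      unfolding A_Suc by simp
    finally show ?thesis .
  qed
qed

corollary shapley_dp_initial:
  assumes "i \<in> {1..n}" "md \<le> 1"
  shows "shapley_dp n l w i (sum w {1..n}) n 0 (lbin, 0, 0, 0) md =
    (\<Sum>T\<in>Pow ({1..n} - {i}). fact (card T) * fact (n - 1 - card T)
       * sum w (greedy l w lbin (if md = 1 then insert i T else T)))"
proof -
  have N: "{n - n<..n} = {1..n}" by auto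
  have "shapley_dp n l w i (sum w {1..n}) n 0 (lbin, 0, 0, 0) md =
      (\<Sum>T\<in>Pow ({1..n} - {i}). dp_summand n l w i md {1..n} 0 (lbin, 0, 0, 0) T)"
    using shapley_dp_sum[of 0 n n 0 w "sum w {1..n}" md l i lbin 0 0] assms(2) unfolding N by simp
  also have "\<dots> = (\<Sum>T\<in>Pow ({1..n} - {i}). fact (card T) * fact (n - 1 - card T)
       * sum w (greedy l w lbin (if md = 1 then insert i T else T)))"
  proof (rule sum.cong)
    fix T assume "T \<in> Pow ({1..n} - {i})"
    then have "finite (if md = 1 then insert i T else T)" by (auto intro: finite_subset)
    note scan = greedy_scan_value[OF this, of l w lbin]
    have U: "(if md = 1 \<and> i \<in> {1..n} then insert i T else T) = (if md = 1 then insert i T else T)"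
      using assms(1) by simp
    show "dp_summand n l w i md {1..n} 0 (lbin, 0, 0, 0) T = fact (card T) * fact (n - 1 - card T)
       * sum w (greedy l w lbin (if md = 1 then insert i T else T))"
      unfolding dp_summand_def U scan add_0 ..
  qed simp
  finally show ?thesis .
qed

theorem shapley_dp_difference:
  fixes n lbin :: nat and l w :: "nat \<Rightarrow> nat"
  assumes "i \<in> {1..n}"
  defines "dp \<equiv> shapley_dp n l w i (sum w {1..n}) n 0 (lbin, 0, 0, 0)"
  shows "real (dp 1) - real (dp 0) = fact n * shapley {1..n} (greedy_game l w lbin) i"
proof -
  have "fact n * shapley {1..n} (greedy_game l w lbin) i =
     (\<Sum>T\<in>Pow ({1..n} - {i}). real (fact (card T) * fact (n - 1 - card T))
        * (real (sum w (greedy l w lbin (insert i T))) - real (sum w (greedy l w lbin T))))"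
    unfolding shapley_def sum_distrib_left greedy_game_def
    by (intro sum.cong) (auto simp: diff_commute[of n _ 1])
  also have "\<dots> = real (dp 1) - real (dp 0)"
    using shapley_dp_initial[OF assms(1), of 1 l w lbin] shapley_dp_initial[OF assms(1), of 0 l w lbin]
    unfolding dp_def by (simp add: of_nat_sum sum_subtractf algebra_simps)
  finally show ?thesis by simp
qed

section \<open>The table in memory\<close>

text \<open>A state \<open>(p, s, b, pw, mw, fl, md)\<close>, where \<open>p = n - d\<close> counts the agents already
  scanned, is stored at its mixed-radix index with digit bounds \<open>(S1, L1, P1, M1, 2, 2)\<close> and
  \<open>p\<close> most significant. The cells a state depends on lie one \<open>p\<close>-layer higher, so the
  table can be filled from the top index downwards.\<close>
fun encode_state :: "nat \<Rightarrow> nat \<Rightarrow> nat \<Rightarrow> nat \<Rightarrow> nat \<times> nat \<times> nat \<times> nat \<times> nat \<times> nat \<times> nat \<Rightarrow> nat" where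
  "encode_state M1 P1 L1 S1 (p, s, b, pw, mw, fl, md) =
     ((((((p * S1 + s) * L1 + b) * P1 + pw) * M1 + mw) * 2 + fl) * 2 + md)"

definition decode_state :: "nat \<Rightarrow> nat \<Rightarrow> nat \<Rightarrow> nat \<Rightarrow> nat \<Rightarrow> nat \<times> nat \<times> nat \<times> nat \<times> nat \<times> nat \<times> nat" where
  "decode_state M1 P1 L1 S1 x =
     (let md = x mod 2; x1 = x div 2; fl = x1 mod 2; x2 = x1 div 2; mw = x2 mod M1; x3 = x2 div M1;
          pw = x3 mod P1; x4 = x3 div P1; b = x4 mod L1; x5 = x4 div L1; s = x5 mod S1; p = x5 div S1
      in (p, s, b, pw, mw, fl, md))"

lemma encode_decode: "encode_state M1 P1 L1 S1 (decode_state M1 P1 L1 S1 x) = x"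
  by (simp add: decode_state_def Let_def add.commute mult.commute)

lemma decode_encode:
  assumes "s < S1" "b < L1" "pw < P1" "mw < M1" "fl < 2" "md < 2"
  shows "decode_state M1 P1 L1 S1 (encode_state M1 P1 L1 S1 (p, s, b, pw, mw, fl, md)) = (p, s, b, pw, mw, fl, md)"
proof -
  have digit: "(a * Q + c) div Q = a \<and> (a * Q + c) mod Q = c" if "c < Q" for a c Q :: nat
    using that by simp
  define y5 where "y5 = p * S1 + s"
  define y4 where "y4 = y5 * L1 + b"
  define y3 where "y3 = y4 * P1 + pw"
  define y2 where "y2 = y3 * M1 + mw"
  define y1 where "y1 = y2 * 2 + fl"
  define y0 where "y0 = y1 * 2 + md"
  have "encode_state M1 P1 L1 S1 (p, s, b, pw, mw, fl, md) = y0"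
    unfolding y0_def y1_def y2_def y3_def y4_def y5_def by simp
  moreover have "y0 div 2 = y1" "y0 mod 2 = md" unfolding y0_def using digit[OF assms(6)] by auto
  moreover have "y1 div 2 = y2" "y1 mod 2 = fl" unfolding y1_def using digit[OF assms(5)] by auto
  moreover have "y2 div M1 = y3" "y2 mod M1 = mw" unfolding y2_def using digit[OF assms(4)] by auto
  moreover have "y3 div P1 = y4" "y3 mod P1 = pw" unfolding y3_def using digit[OF assms(3)] by auto
  moreover have "y4 div L1 = y5" "y4 mod L1 = b" unfolding y4_def using digit[OF assms(2)] by auto
  moreover have "y5 div S1 = p" "y5 mod S1 = s" unfolding y5_def using digit[OF assms(1)] by auto
  ultimately show ?thesis unfolding decode_state_def Let_def by simp
qed

lemma mult_add_less: "(a::nat) < A \<Longrightarrow> c < C \<Longrightarrow> a * C + c < A * C"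
proof -
  assume "a < A" "c < C"
  then have "a * C + c < (a + 1) * C" by simp
  also have "\<dots> \<le> A * C" using \<open>a < A\<close> by (intro mult_right_mono) auto
  finally show ?thesis .
qed

lemma encode_state_layer:
  assumes "s < S1" "b < L1" "pw < P1" "mw < M1" "fl < 2" "md < 2"
  shows "encode_state M1 P1 L1 S1 (p, s, b, pw, mw, fl, md)
           = p * (S1 * L1 * P1 * M1 * 4) + encode_state M1 P1 L1 S1 (0, s, b, pw, mw, fl, md)"
    and "encode_state M1 P1 L1 S1 (0, s, b, pw, mw, fl, md) < S1 * L1 * P1 * M1 * 4"
proof -
  show "encode_state M1 P1 L1 S1 (p, s, b, pw, mw, fl, md)
           = p * (S1 * L1 * P1 * M1 * 4) + encode_state M1 P1 L1 S1 (0, s, b, pw, mw, fl, md)"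
    by (simp add: algebra_simps)
  have "((((s * L1 + b) * P1 + pw) * M1 + mw) * 2 + fl) * 2 + md < S1 * L1 * P1 * M1 * 2 * 2"
    by (intro mult_add_less assms)
  then show "encode_state M1 P1 L1 S1 (0, s, b, pw, mw, fl, md) < S1 * L1 * P1 * M1 * 4" by simp
qed

definition layer_size :: "nat \<Rightarrow> nat \<Rightarrow> nat \<Rightarrow> nat \<Rightarrow> nat" where
  "layer_size n lbin PW MW = (n + 1) * (lbin + 1) * (PW + 1) * (MW + 1) * 4"

definition dp_at :: "nat \<Rightarrow> nat \<Rightarrow> (nat \<Rightarrow> nat) \<Rightarrow> (nat \<Rightarrow> nat) \<Rightarrow> nat \<Rightarrow> nat \<Rightarrow> nat \<Rightarrow> nat \<Rightarrow> nat" where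
  "dp_at n lbin l w i PW MW x =
     (case decode_state (MW + 1) (PW + 1) (lbin + 1) (n + 1) x of
        (p, s, b, pw, mw, fl, md) \<Rightarrow> shapley_dp n l w i PW (n - p) s (b, pw, mw, fl) md)"

lemma dp_at_encode:
  "s \<le> n \<Longrightarrow> b \<le> lbin \<Longrightarrow> pw \<le> PW \<Longrightarrow> mw \<le> MW \<Longrightarrow> fl < 2 \<Longrightarrow> md < 2 \<Longrightarrow>
   dp_at n lbin l w i PW MW (encode_state (MW + 1) (PW + 1) (lbin + 1) (n + 1) (p, s, b, pw, mw, fl, md))
     = shapley_dp n l w i PW (n - p) s (b, pw, mw, fl) md"
  unfolding dp_at_def by (subst decode_encode) auto

section \<open>Filling one table cell\<close>

text \<open>Memory layout while the table is filled (registers below 128 are working registers):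
  \<^item> 1, 2: the constants 0 and 1; 3 to 7: \<open>n\<close>, \<open>l_bin\<close>, \<open>i\<close>, \<open>PW = w(N)\<close>, \<open>MW = max w\<close>;
  \<^item> 0, 8, 9: the bases \<open>128 n\<close>, \<open>192 n\<close>, \<open>256 n\<close> of the item area, the factorial table and the table;
  \<^item> 10 to 14: the radices \<open>n + 1\<close>, \<open>l_bin + 1\<close>, \<open>PW + 1\<close>, \<open>MW + 1\<close> and the layer size;
  \<^item> 15: the next cell to fill; 19: discarded results; 20 to 69: temporaries;
  \<^item> \<open>128 n + 2k + 1\<close>, \<open>128 n + 2k + 2\<close>: \<open>l_k\<close>, \<open>w_k\<close>; \<open>192 n + t\<close>: \<open>t!\<close>; \<open>256 n + x\<close>: cell \<open>x\<close>.\<close>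
definition dp_context :: "nat \<Rightarrow> nat \<Rightarrow> (nat \<Rightarrow> nat) \<Rightarrow> (nat \<Rightarrow> nat) \<Rightarrow> nat \<Rightarrow> nat \<Rightarrow> nat \<Rightarrow> (nat \<Rightarrow> int) \<Rightarrow> bool" where
  "dp_context n lbin l w i PW MW m \<longleftrightarrow>
     m 0 = int (128 * n) \<and> m 1 = 0 \<and> m 2 = 1 \<and> m 3 = int n \<and> m 4 = int lbin \<and>
     m 5 = int i \<and> m 6 = int PW \<and> m 7 = int MW \<and> m 8 = int (192 * n) \<and> m 9 = int (256 * n) \<and>
     m 10 = int (n + 1) \<and> m 11 = int (lbin + 1) \<and> m 12 = int (PW + 1) \<and> m 13 = int (MW + 1) \<and>
     m 14 = int (layer_size n lbin PW MW) \<and>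
     (\<forall>k\<in>{1..n}. m (128 * n + 2 * k + 1) = int (l k) \<and> m (128 * n + 2 * k + 2) = int (w k)) \<and>
     (\<forall>t\<le>n. m (192 * n + t) = int (fact t))"

lemma dp_context_cong:
  assumes "dp_context n lbin l w i PW MW m'" "1 \<le> n"
    and "\<forall>a. (a < 19 \<and> a \<noteq> 15) \<or> (128 \<le> a \<and> a < 256 * n) \<longrightarrow> m a = m' a"
  shows "dp_context n lbin l w i PW MW m"
proof -
  have "m a = m' a" if "a < 15" for a using assms(3) that by auto
  moreover have "m (128 * n + 2 * k + 1) = m' (128 * n + 2 * k + 1)"
      "m (128 * n + 2 * k + 2) = m' (128 * n + 2 * k + 2)" if "k \<in> {1..n}" for k
    using assms(2,3) that by auto
  moreover have "m (192 * n + t) = m' (192 * n + t)" if "t \<le> n" for t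
    using assms(2,3) that by auto
  ultimately show ?thesis using assms(1) unfolding dp_context_def by auto
qed

fun SEQ :: "com list \<Rightarrow> com" where
  "SEQ [] = Basic (LoadConst 19 0)"
| "SEQ [c] = c"
| "SEQ (c # cs) = Seq c (SEQ cs)"

text \<open>\<open>Move\<close> assumes register 1 holds 0, as it does once the header has been loaded.\<close>
abbreviation "Move d a \<equiv> Basic (Add d a 1)"
abbreviation "Skip \<equiv> Basic (LoadConst 19 0)"

lemma int_div_int: "int a div int b = int (a div b)"
  by (simp add: zdiv_int)

lemma int_minus_div_mult: "int a - int (a div b) * int b = int (a mod b)"
  by (metis minus_div_mult_eq_mod of_nat_mult zmod_int zdiv_int)

lemma int_div_2: "int a div 2 = int (a div 2)"
  by simp

lemma int_minus_div_mult_2: "int a - int (a div 2) * 2 = int (a mod 2)"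
  using int_minus_div_mult[of a 2] by simp

definition decode_cell :: com where
  "decode_cell = SEQ [Move 30 15, Basic (LoadConst 20 2),
     Basic (Div 32 30 20), Basic (Mul 33 32 20), Basic (Sub 31 30 33),
     Basic (Div 35 32 20), Basic (Mul 33 35 20), Basic (Sub 34 32 33),
     Basic (Div 37 35 13), Basic (Mul 33 37 13), Basic (Sub 36 35 33),
     Basic (Div 39 37 12), Basic (Mul 33 39 12), Basic (Sub 38 37 33),
     Basic (Div 41 39 11), Basic (Mul 33 41 11), Basic (Sub 40 39 33),
     Basic (Div 43 41 10), Basic (Mul 33 43 10), Basic (Sub 42 41 33),
     Basic (Sub 44 3 43), Basic (Sub 44 44 2)]"

lemma decode_cell_spec:
  assumes "m 15 = int x" "m 13 = int M1" "m 12 = int P1" "m 11 = int L1" "m 10 = int S1"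
    "m 3 = int n" "m 2 = 1" "m 1 = 0"
  shows "wp decode_cell m (\<lambda>m' t. t = 22 \<and> (\<forall>a. a < 19 \<or> 128 \<le> a \<longrightarrow> m' a = m a) \<and>
     m' 30 = int x \<and> m' 20 = 2 \<and>
     m' 31 = int (x mod 2) \<and> m' 34 = int (x div 2 mod 2) \<and> m' 36 = int (x div 2 div 2 mod M1) \<and>
     m' 38 = int (x div 2 div 2 div M1 mod P1) \<and> m' 40 = int (x div 2 div 2 div M1 div P1 mod L1) \<and>
     m' 42 = int (x div 2 div 2 div M1 div P1 div L1 mod S1) \<and>
     m' 43 = int (x div 2 div 2 div M1 div P1 div L1 div S1) \<and>
     m' 44 = int n - int (x div 2 div 2 div M1 div P1 div L1 div S1) - 1)"
  unfolding decode_cell_def using assms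
  by (simp add: wp_Seq wp_Basic int_div_int int_div_2 int_minus_div_mult int_minus_div_mult_2)

definition dp_leaf :: com where
  "dp_leaf = SEQ [Basic (Add 45 8 42), Basic (Load 46 45),
     Basic (Sub 47 3 42), Basic (Sub 47 47 2), Branch (CNeg 47) (Move 47 1) Skip,
     Basic (Add 45 8 47), Basic (Load 48 45),
     Basic (Sub 49 38 36), Branch (CNeg 49) (Move 49 36) (Move 49 38),
     Basic (Mul 46 46 48), Basic (Mul 46 46 49)]"

lemma dp_leaf_spec:
  assumes "m 3 = int n" "m 8 = int Fb" "m 42 = int s" "m 38 = int pw" "m 36 = int mw" "m 2 = 1" "m 1 = 0"
    "\<forall>t\<le>n. m (Fb + t) = int (fact t)" "s \<le> n" "128 \<le> Fb"
  shows "wp dp_leaf m (\<lambda>m' t. t \<le> 20 \<and> agree_except {19, 45, 46, 47, 48, 49} m' m \<and>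
     m' 46 = int (fact s * fact (n - 1 - s) * max pw mw))"
proof -
  have fact_n_s: "m (Fb + (n - Suc s)) = int (fact (n - Suc s))" using assms(8) by simp
  have facts: "m (Fb + s) = int (fact s)" "m Fb = 1" "s < n \<Longrightarrow> m (Fb + n - Suc s) = int (fact (n - Suc s))"
    using assms(8,9) fact_n_s by (auto dest: spec[of _ 0])
  have e: "nat (int a + int b) = a + b" "s < n \<Longrightarrow> int n - int s - 1 = int (n - 1 - s)" for a b
    by simp_all
  show ?thesis
    unfolding dp_leaf_def using assms facts
    by (auto simp add: wp_Seq wp_Basic wp_Branch agree_except_def nat_eq_iff max_def e simp del: of_nat_diff)
qed

text \<open>The non-leaf case is split into blocks: load \<open>l_k\<close>, \<open>w_k\<close> and the cell of the state
  without agent \<open>k = p + 1\<close> (\<open>inner_load\<close>), compute the new size, maximal weight and packing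
  state, look up the cell of the state with \<open>k\<close> (\<open>inner_lookup\<close>), and combine the two.\<close>
definition inner_load :: com where
  "inner_load = SEQ [Basic (Add 50 43 2),
     Basic (Add 51 50 50), Basic (Add 51 51 0), Basic (Add 51 51 2), Basic (Load 52 51),
     Basic (Add 51 51 2), Basic (Load 53 51),
     Basic (Add 54 9 30), Basic (Add 54 54 14), Basic (Load 55 54)]"

definition inner_size :: com where
  "inner_size = SEQ [Basic (Add 56 42 2), Basic (Sub 57 3 56), Branch (CNeg 57) (Move 56 3) Skip,
     Basic (Sub 57 50 5), Branch (CZero 57) (Branch (CZero 31) Skip (Move 56 42)) Skip]"

definition inner_maxw :: com where
  "inner_maxw = SEQ [Basic (Sub 59 36 53), Branch (CNeg 59) (Move 58 53) (Move 58 36)]"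

definition take_item :: com where
  "take_item = SEQ [Move 60 63, Basic (Add 61 38 53), Basic (Sub 63 6 61),
     Branch (CNeg 63) (Move 61 6) Skip, Basic (LoadConst 62 0)]"

definition stop_scan :: com where
  "stop_scan = SEQ [Move 60 40, Move 61 38, Basic (LoadConst 62 1)]"

definition inner_greedy :: com where
  "inner_greedy = Branch (CZero 34) (Seq (Basic (Sub 63 40 52)) (Branch (CNeg 63) stop_scan take_item)) stop_scan"

definition inner_lookup :: com where
  "inner_lookup = SEQ [Basic (Mul 65 56 11), Basic (Add 65 65 60), Basic (Mul 65 65 12), Basic (Add 65 65 61),
     Basic (Mul 65 65 13), Basic (Add 65 65 58), Basic (Mul 65 65 20), Basic (Add 65 65 62),
     Basic (Mul 65 65 20), Basic (Add 65 65 31),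
     Basic (Mul 66 50 14), Basic (Add 65 65 66), Basic (Add 65 65 9), Basic (Load 67 65)]"

definition inner_combine :: com where
  "inner_combine = SEQ [Basic (Sub 68 50 5),
     Branch (CZero 68) (Branch (CZero 31) (Move 46 55) (Move 46 67)) (Basic (Add 46 55 67))]"

definition dp_inner :: com where
  "dp_inner = SEQ [inner_load, inner_size, inner_maxw, inner_greedy, inner_lookup, inner_combine]"

lemma inner_load_spec:
  assumes "m 43 = int p" "m 2 = 1" "m 0 = int Bb" "m 9 = int Tb" "m 30 = int x" "m 14 = int SZ"
    "128 \<le> Bb" "128 \<le> Tb"
    "m (Bb + 2 * Suc p + 1) = int lk" "m (Bb + 2 * Suc p + 2) = int wk" "m (Tb + x + SZ) = int vs"
  shows "wp inner_load m (\<lambda>m' t. t = 10 \<and> agree_except {50..55} m' m \<and>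
     m' 50 = int (Suc p) \<and> m' 52 = int lk \<and> m' 53 = int wk \<and> m' 55 = int vs)"
proof -
  have e: "nat (3 + (2 * int p + int Bb)) = Suc (Suc (Suc (Bb + 2 * p)))"
    "nat (4 + (2 * int p + int Bb)) = Suc (Suc (Suc (Suc (Bb + 2 * p))))"
    "nat (int Tb + int x + int SZ) = Tb + x + SZ" by simp_all
  show ?thesis unfolding inner_load_def using assms
    by (auto simp add: wp_Seq wp_Basic agree_except_def nat_eq_iff e)
qed

lemma inner_size_spec:
  assumes "m 42 = int s" "m 3 = int n" "m 50 = int k" "m 5 = int i" "m 31 = int md" "m 2 = 1" "m 1 = 0" "md \<le> 1"
  shows "wp inner_size m (\<lambda>m' t. t \<le> 12 \<and> agree_except {19, 56, 57} m' m \<and>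
     m' 56 = int (if k = i \<and> md = 1 then s else min (s + 1) n))"
  unfolding inner_size_def using assms
  by (auto simp add: wp_Seq wp_Basic wp_Branch agree_except_def)

lemma inner_maxw_spec:
  assumes "m 36 = int mw" "m 53 = int wk" "m 1 = 0"
  shows "wp inner_maxw m (\<lambda>m' t. t \<le> 5 \<and> agree_except {58, 59} m' m \<and> m' 58 = int (max mw wk))"
  unfolding inner_maxw_def using assms
  by (auto simp add: wp_Seq wp_Basic wp_Branch agree_except_def)

lemma inner_greedy_spec:
  assumes "m 34 = int fl" "m 40 = int b" "m 52 = int lk" "m 38 = int pw" "m 53 = int wk" "m 6 = int PW" "m 1 = 0"
  shows "wp inner_greedy m (\<lambda>m' t. t \<le> 15 \<and> agree_except {19, 60, 61, 62, 63} m' m \<and>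
     m' 60 = int (if fl = 0 \<and> lk \<le> b then b - lk else b) \<and>
     m' 61 = int (if fl = 0 \<and> lk \<le> b then min (pw + wk) PW else pw) \<and>
     m' 62 = int (if fl = 0 \<and> lk \<le> b then 0 else 1))"
  unfolding inner_greedy_def stop_scan_def take_item_def using assms
  by (auto simp add: wp_Seq wp_Basic wp_Branch agree_except_def)

lemma inner_lookup_spec:
  assumes "m 56 = int s'" "m 11 = int L1" "m 60 = int b'" "m 12 = int P1" "m 61 = int pw'" "m 13 = int M1"
    "m 58 = int mw'" "m 20 = 2" "m 62 = int fl'" "m 31 = int md" "m 50 = int k" "m 14 = int SZ" "m 9 = int Tb"
    "128 \<le> Tb" "SZ = S1 * L1 * P1 * M1 * 4"
    "m (Tb + encode_state M1 P1 L1 S1 (k, s', b', pw', mw', fl', md)) = int vt"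
  shows "wp inner_lookup m (\<lambda>m' t. t = 14 \<and> agree_except {65, 66, 67} m' m \<and> m' 67 = int vt)"
proof -
  have e: "4 * (((int s' * int L1 + int b') * int P1 + int pw') * int M1) + 4 * int mw' + int fl' * 2 + int md
      + int k * (int S1 * int L1 * int P1 * int M1 * 4) + int Tb
      = int (Tb + encode_state M1 P1 L1 S1 (k, s', b', pw', mw', fl', md))"
    "nat (int a + int b) = a + b" for a b
    by (simp_all add: algebra_simps)
  show ?thesis unfolding inner_lookup_def using assms
    by (auto simp add: wp_Seq wp_Basic agree_except_def nat_eq_iff e simp del: encode_state.simps)
qed

lemma inner_combine_spec:
  assumes "m 50 = int k" "m 5 = int i" "m 31 = int md" "m 55 = int vs" "m 67 = int vt" "m 1 = 0"
  shows "wp inner_combine m (\<lambda>m' t. t \<le> 5 \<and> agree_except {46, 68} m' m \<and>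
     m' 46 = int (if k = i then (if md = 0 then vs else vt) else vs + vt))"
  unfolding inner_combine_def using assms
  by (auto simp add: wp_Seq wp_Basic wp_Branch agree_except_def)

lemma dp_inner_spec:
  assumes regs: "m 0 = int Bb" "m 1 = 0" "m 2 = 1" "m 3 = int n" "m 5 = int i" "m 6 = int PW" "m 9 = int Tb"
    "m 11 = int Lr" "m 12 = int Pr" "m 13 = int Mr" "m 14 = int SZ" "m 20 = 2" "m 30 = int x" "m 31 = int md"
    "m 34 = int fl" "m 36 = int mw" "m 38 = int pw" "m 40 = int b" "m 42 = int s" "m 43 = int p"
    and bounds: "md \<le> 1" "128 \<le> Bb" "128 \<le> Tb" "SZ = Sr * Lr * Pr * Mr * 4"
    and k: "k = Suc p"
    and item: "m (Bb + 2 * k + 1) = int (l k)" "m (Bb + 2 * k + 2) = int (w k)"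
    and step: "capped_step PW l w k (b, pw, mw, fl) = (b', pw', mw', fl')"
    and s': "s' = (if k = i \<and> md = 1 then s else min (s + 1) n)"
    and cells: "m (Tb + x + SZ) = int vs" "m (Tb + encode_state Mr Pr Lr Sr (k, s', b', pw', mw', fl', md)) = int vt"
  shows "wp dp_inner m (\<lambda>m' t. t \<le> 61 \<and> agree_except ({19, 46} \<union> {50..69}) m' m \<and>
     m' 46 = int (if k = i then (if md = 0 then vs else vt) else vs + vt))"
proof -
  have st': "b' = (if fl = 0 \<and> l k \<le> b then b - l k else b)" "pw' = (if fl = 0 \<and> l k \<le> b then min (pw + w k) PW else pw)"
    "mw' = max mw (w k)" "fl' = (if fl = 0 \<and> l k \<le> b then 0 else 1)"
    using step by (auto split: if_splits)
  have "wp inner_load m (\<lambda>m' t. t = 10 \<and> agree_except {50..55} m' m \<and>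
      m' 50 = int (Suc p) \<and> m' 52 = int (l k) \<and> m' 53 = int (w k) \<and> m' 55 = int vs)"
    by (rule inner_load_spec) (use regs bounds item cells k in auto)
  then obtain m1 t1 where X1: "exec_com inner_load m m1 t1" and H1: "t1 = 10 \<and> agree_except {50..55} m1 m \<and>
      m1 50 = int k \<and> m1 52 = int (l k) \<and> m1 53 = int (w k) \<and> m1 55 = int vs"
    unfolding k by (rule wpE)
  have "wp inner_size m1 (\<lambda>m' t. t \<le> 12 \<and> agree_except {19, 56, 57} m' m1 \<and> m' 56 = int s')"
    unfolding s' by (rule inner_size_spec) (use H1 regs bounds in \<open>auto simp: agree_except_def\<close>)
  then obtain m2 t2 where X2: "exec_com inner_size m1 m2 t2"
    and H2: "t2 \<le> 12 \<and> agree_except {19, 56, 57} m2 m1 \<and> m2 56 = int s'" by (rule wpE)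
  have "wp inner_maxw m2 (\<lambda>m' t. t \<le> 5 \<and> agree_except {58, 59} m' m2 \<and> m' 58 = int mw')"
    unfolding st' by (rule inner_maxw_spec) (use H1 H2 regs in \<open>auto simp: agree_except_def\<close>)
  then obtain m3 t3 where X3: "exec_com inner_maxw m2 m3 t3"
    and H3: "t3 \<le> 5 \<and> agree_except {58, 59} m3 m2 \<and> m3 58 = int mw'" by (rule wpE)
  have "wp inner_greedy m3 (\<lambda>m' t. t \<le> 15 \<and> agree_except {19, 60, 61, 62, 63} m' m3 \<and>
      m' 60 = int b' \<and> m' 61 = int pw' \<and> m' 62 = int fl')"
    unfolding st' by (rule inner_greedy_spec) (use H1 H2 H3 regs in \<open>auto simp: agree_except_def\<close>)
  then obtain m4 t4 where X4: "exec_com inner_greedy m3 m4 t4" and H4: "t4 \<le> 15 \<and>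
      agree_except {19, 60, 61, 62, 63} m4 m3 \<and> m4 60 = int b' \<and> m4 61 = int pw' \<and> m4 62 = int fl'"
    by (rule wpE)
  have "wp inner_lookup m4 (\<lambda>m' t. t = 14 \<and> agree_except {65, 66, 67} m' m4 \<and> m' 67 = int vt)"
    by (rule inner_lookup_spec[where Tb = Tb]) (use H1 H2 H3 H4 regs bounds cells in \<open>auto simp: agree_except_def\<close>)
  then obtain m5 t5 where X5: "exec_com inner_lookup m4 m5 t5"
    and H5: "t5 = 14 \<and> agree_except {65, 66, 67} m5 m4 \<and> m5 67 = int vt" by (rule wpE)
  have "wp inner_combine m5 (\<lambda>m' t. t \<le> 5 \<and> agree_except {46, 68} m' m5 \<and>
      m' 46 = int (if k = i then (if md = 0 then vs else vt) else vs + vt))"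
    by (rule inner_combine_spec) (use H1 H2 H3 H4 H5 regs in \<open>auto simp: agree_except_def\<close>)
  then obtain m6 t6 where X6: "exec_com inner_combine m5 m6 t6" and H6: "t6 \<le> 5 \<and>
      agree_except {46, 68} m6 m5 \<and> m6 46 = int (if k = i then (if md = 0 then vs else vt) else vs + vt)"
    by (rule wpE)
  have "exec_com dp_inner m m6 (t1 + (t2 + (t3 + (t4 + (t5 + t6)))))"
    unfolding dp_inner_def SEQ.simps
    by (rule exec_Seq[OF X1 exec_Seq[OF X2 exec_Seq[OF X3 exec_Seq[OF X4 exec_Seq[OF X5 X6]]]]])
  then show ?thesis by (rule wpI) (use H1 H2 H3 H4 H5 H6 in \<open>auto simp: agree_except_def\<close>)
qed

lemma encode_state_next_layer:
  fixes M1 P1 L1 S1 :: nat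
  defines "SZ \<equiv> S1 * L1 * P1 * M1 * 4"
  assumes x: "x = encode_state M1 P1 L1 S1 (p, s, b, pw, mw, fl, md)" and p: "Suc p < S1"
    and digits: "s < S1" "b < L1" "pw < P1" "mw < M1" "fl < 2" "md < 2"
    and digits': "s' < S1" "b' < L1" "pw' < P1" "mw' < M1" "fl' < 2"
  shows "x + SZ = encode_state M1 P1 L1 S1 (Suc p, s, b, pw, mw, fl, md)" "x + SZ < S1 * SZ"
    "x < encode_state M1 P1 L1 S1 (Suc p, s', b', pw', mw', fl', md)"
    "encode_state M1 P1 L1 S1 (Suc p, s', b', pw', mw', fl', md) < S1 * SZ"
proof -
  note layer = encode_state_layer
  note here = layer(1)[OF digits, of p, folded SZ_def] layer(2)[OF digits, folded SZ_def]
    and there = layer(1)[OF digits' digits(6), of "Suc p", folded SZ_def]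
      layer(2)[OF digits' digits(6), folded SZ_def]
  have "Suc (Suc p) * SZ \<le> S1 * SZ" using p by (intro mult_le_mono1) simp
  then have top: "p * SZ + SZ + SZ \<le> S1 * SZ" by simp
  have "Suc p * SZ = p * SZ + SZ" by simp
  note arith = x here there top this
  show "x + SZ = encode_state M1 P1 L1 S1 (Suc p, s, b, pw, mw, fl, md)"
    using x layer(1)[OF digits, of "Suc p"] here(1) unfolding SZ_def by (simp only: mult_Suc add_ac)
  show "x + SZ < S1 * SZ" using arith by linarith
  show "x < encode_state M1 P1 L1 S1 (Suc p, s', b', pw', mw', fl', md)" using arith by linarith
  show "encode_state M1 P1 L1 S1 (Suc p, s', b', pw', mw', fl', md) < S1 * SZ" using arith by linarith
qed

lemma dp_successor_cells:
  fixes n lbin PW MW :: nat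
  defines "SZ \<equiv> layer_size n lbin PW MW"
  assumes x: "x = encode_state (MW + 1) (PW + 1) (lbin + 1) (n + 1) (p, s, b, pw, mw, fl, md)" and p: "p < n"
    and digits: "s < n + 1" "b < lbin + 1" "pw < PW + 1" "mw < MW + 1" "fl < 2" "md < 2"
    and digits': "s' < n + 1" "b' < lbin + 1" "pw' < PW + 1" "mw' < MW + 1" "fl' < 2"
    and tab: "\<forall>y. x < y \<and> y < (n + 1) * SZ \<longrightarrow> m (256 * n + y) = int (dp_at n lbin l w i PW MW y)"
  shows "m (256 * n + x + SZ) = int (shapley_dp n l w i PW (n - Suc p) s (b, pw, mw, fl) md)"
    and "m (256 * n + encode_state (MW + 1) (PW + 1) (lbin + 1) (n + 1) (Suc p, s', b', pw', mw', fl', md))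
      = int (shapley_dp n l w i PW (n - Suc p) s' (b', pw', mw', fl') md)"
proof -
  let ?enc = "encode_state (MW + 1) (PW + 1) (lbin + 1) (n + 1)"
  let ?dp = "dp_at n lbin l w i PW MW"
  have SZ_eq: "SZ = (n + 1) * (lbin + 1) * (PW + 1) * (MW + 1) * 4" unfolding SZ_def layer_size_def ..
  have "Suc p < n + 1" using p by simp
  note idx = encode_state_next_layer[OF x this digits digits', folded SZ_eq]
  have "0 < SZ" unfolding SZ_eq by simp
  then have "m (256 * n + (x + SZ)) = int (?dp (x + SZ))"
    using tab[rule_format, of "x + SZ"] idx(2) by simp
  also have "?dp (x + SZ) = shapley_dp n l w i PW (n - Suc p) s (b, pw, mw, fl) md"
    unfolding idx(1) by (rule dp_at_encode) (use digits in auto)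
  finally show "m (256 * n + x + SZ) = int (shapley_dp n l w i PW (n - Suc p) s (b, pw, mw, fl) md)"
    by (simp add: add.assoc)
  have "m (256 * n + ?enc (Suc p, s', b', pw', mw', fl', md)) = int (?dp (?enc (Suc p, s', b', pw', mw', fl', md)))"
    using tab[rule_format, of "?enc (Suc p, s', b', pw', mw', fl', md)"] idx(3,4) by simp
  also have "?dp (?enc (Suc p, s', b', pw', mw', fl', md)) = shapley_dp n l w i PW (n - Suc p) s' (b', pw', mw', fl') md"
    by (rule dp_at_encode) (use digits digits' in auto)
  finally show "m (256 * n + ?enc (Suc p, s', b', pw', mw', fl', md))
      = int (shapley_dp n l w i PW (n - Suc p) s' (b', pw', mw', fl') md)" .
qed

lemma dp_value_spec:
  fixes n lbin PW MW :: nat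
  assumes St: "dp_context n lbin l w i PW MW m" and n1: "1 \<le> n" and wle: "\<forall>k\<in>{1..n}. w k \<le> MW"
    and x: "x < (n + 1) * layer_size n lbin PW MW"
    and dec: "decode_state (MW + 1) (PW + 1) (lbin + 1) (n + 1) x = (p, s, b, pw, mw, fl, md)"
    and regs: "m 20 = 2" "m 30 = int x" "m 31 = int md" "m 34 = int fl" "m 36 = int mw" "m 38 = int pw"
      "m 40 = int b" "m 42 = int s" "m 43 = int p" "m 44 = int n - int p - 1"
    and tab: "\<forall>y. x < y \<and> y < (n + 1) * layer_size n lbin PW MW \<longrightarrow>
      m (256 * n + y) = int (dp_at n lbin l w i PW MW y)"
  shows "wp (Branch (CNeg 44) dp_leaf dp_inner) m (\<lambda>m' t. t \<le> 63 \<and>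
     agree_except ({19} \<union> {45..69}) m' m \<and> m' 46 = int (dp_at n lbin l w i PW MW x))"
proof -
  define SZ where "SZ = layer_size n lbin PW MW"
  have SZ_eq: "SZ = (n + 1) * (lbin + 1) * (PW + 1) * (MW + 1) * 4" unfolding SZ_def layer_size_def ..
  let ?enc = "encode_state (MW + 1) (PW + 1) (lbin + 1) (n + 1)"
  let ?dp = "dp_at n lbin l w i PW MW"
  have digits: "s < n + 1" "b < lbin + 1" "pw < PW + 1" "mw < MW + 1" "fl < 2" "md < 2"
    using dec by (auto simp: decode_state_def Let_def)
  have xenc: "x = ?enc (p, s, b, pw, mw, fl, md)"
    using encode_decode[of "MW + 1" "PW + 1" "lbin + 1" "n + 1" x] dec by simp
  have "p * SZ \<le> x" using encode_state_layer(1)[OF digits, of p] xenc unfolding SZ_eq by simp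
  then have "p \<le> n" using x unfolding SZ_def[symmetric] by (metis less_Suc_eq_le le_less_trans mult_less_cancel2 Suc_eq_plus1)
  have val: "?dp x = shapley_dp n l w i PW (n - p) s (b, pw, mw, fl) md" unfolding dp_at_def dec by simp
  from St have S: "m 0 = int (128 * n)" "m 1 = 0" "m 2 = 1" "m 3 = int n" "m 5 = int i" "m 6 = int PW"
     "m 8 = int (192 * n)" "m 9 = int (256 * n)" "m 11 = int (lbin + 1)" "m 12 = int (PW + 1)"
     "m 13 = int (MW + 1)" "m 14 = int SZ"
     and items: "\<forall>k\<in>{1..n}. m (128 * n + 2 * k + 1) = int (l k) \<and> m (128 * n + 2 * k + 2) = int (w k)"
     and facts: "\<forall>t\<le>n. m (192 * n + t) = int (fact t)"
    unfolding dp_context_def SZ_def by auto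
  show ?thesis
  proof (cases "p < n")
    case False
    then have "p = n" using \<open>p \<le> n\<close> by simp
    have "wp dp_leaf m (\<lambda>m' t. t \<le> 20 \<and> agree_except {19, 45, 46, 47, 48, 49} m' m \<and>
        m' 46 = int (fact s * fact (n - 1 - s) * max pw mw))"
      by (rule dp_leaf_spec) (use S regs digits facts n1 in auto)
    then show ?thesis using \<open>p = n\<close> regs unfolding wp_Branch val
      by (auto elim!: wp_mono simp: agree_except_def)
  next
    case True
    define k where "k = Suc p"
    have kN: "k \<in> {1..n}" using True unfolding k_def by simp
    obtain b' pw' mw' fl' where step: "capped_step PW l w k (b, pw, mw, fl) = (b', pw', mw', fl')"
      by (metis prod_cases4)
    define s' where "s' = (if k = i \<and> md = 1 then s else min (s + 1) n)"
    have "w k \<le> MW" using wle kN by blast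
    then have digits': "s' < n + 1" "b' < lbin + 1" "pw' < PW + 1" "mw' < MW + 1" "fl' < 2"
      using step digits unfolding s'_def by (auto split: if_splits)
    define vs where "vs = shapley_dp n l w i PW (n - k) s (b, pw, mw, fl) md"
    define vt where "vt = shapley_dp n l w i PW (n - k) s' (b', pw', mw', fl') md"
    note cells = dp_successor_cells[OF xenc True digits digits' tab, folded SZ_def k_def, folded vs_def vt_def]
    have bounds: "md \<le> 1" "128 \<le> 128 * n" "128 \<le> 256 * n" using digits n1 by auto
    have item: "m (128 * n + 2 * k + 1) = int (l k)" "m (128 * n + 2 * k + 2) = int (w k)"
      using items kN by auto
    note dp_inner_spec[OF S(1-6) S(8) S(9-12) regs(1-9) bounds SZ_eq k_def item step s'_def cells]
    moreover have "(if k = i then (if md = 0 then vs else vt) else vs + vt) = ?dp x"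
    proof -
      have "n - p = Suc (n - k)" "n - (n - k) = k" using True unfolding k_def by auto
      then show ?thesis
        unfolding val vs_def vt_def s'_def using step digits(6) by (auto simp: Let_def)
    qed
    moreover have "\<not> holds (CNeg 44) m" using regs True by simp
    ultimately show ?thesis unfolding wp_Branch
      by (auto elim!: wp_mono simp: agree_except_def)
  qed
qed

definition dp_cell :: com where
  "dp_cell = SEQ [decode_cell, Branch (CNeg 44) dp_leaf dp_inner,
     Basic (Add 69 9 30), Basic (Store 69 46), Basic (Sub 15 15 2)]"

lemma dp_cell_spec:
  fixes n lbin PW MW :: nat
  assumes St: "dp_context n lbin l w i PW MW m" and n1: "1 \<le> n" and wle: "\<forall>k\<in>{1..n}. w k \<le> MW"
    and x: "m 15 = int x" "x < (n + 1) * layer_size n lbin PW MW"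
    and tab: "\<forall>y. x < y \<and> y < (n + 1) * layer_size n lbin PW MW \<longrightarrow>
      m (256 * n + y) = int (dp_at n lbin l w i PW MW y)"
  shows "wp dp_cell m (\<lambda>m' t. t \<le> 100 \<and> m' 15 = int x - 1 \<and>
     m' (256 * n + x) = int (dp_at n lbin l w i PW MW x) \<and>
     (\<forall>a. (a < 19 \<and> a \<noteq> 15) \<or> (128 \<le> a \<and> a \<noteq> 256 * n + x) \<longrightarrow> m' a = m a))"
proof -
  obtain p s b pw mw fl md
    where dec: "decode_state (MW + 1) (PW + 1) (lbin + 1) (n + 1) x = (p, s, b, pw, mw, fl, md)"
    by (metis prod_cases7)
  then have digits: "md = x mod 2" "fl = x div 2 mod 2" "mw = x div 2 div 2 mod (MW + 1)"
     "pw = x div 2 div 2 div (MW + 1) mod (PW + 1)" "b = x div 2 div 2 div (MW + 1) div (PW + 1) mod (lbin + 1)"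
     "s = x div 2 div 2 div (MW + 1) div (PW + 1) div (lbin + 1) mod (n + 1)"
     "p = x div 2 div 2 div (MW + 1) div (PW + 1) div (lbin + 1) div (n + 1)"
    by (auto simp: decode_state_def Let_def)
  have "wp decode_cell m (\<lambda>m' t. t = 22 \<and> (\<forall>a. a < 19 \<or> 128 \<le> a \<longrightarrow> m' a = m a) \<and>
      m' 30 = int x \<and> m' 20 = 2 \<and> m' 31 = int md \<and> m' 34 = int fl \<and> m' 36 = int mw \<and>
      m' 38 = int pw \<and> m' 40 = int b \<and> m' 42 = int s \<and> m' 43 = int p \<and> m' 44 = int n - int p - 1)"
    unfolding digits by (rule decode_cell_spec) (use St x in \<open>auto simp: dp_context_def\<close>)
  then obtain m1 t1 where X1: "exec_com decode_cell m m1 t1" and H1: "t1 = 22"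
      "\<forall>a. a < 19 \<or> 128 \<le> a \<longrightarrow> m1 a = m a" "m1 30 = int x" "m1 20 = 2" "m1 31 = int md"
      "m1 34 = int fl" "m1 36 = int mw" "m1 38 = int pw" "m1 40 = int b" "m1 42 = int s" "m1 43 = int p"
      "m1 44 = int n - int p - 1"
    by (rule wpE) blast
  have St1: "dp_context n lbin l w i PW MW m1" by (rule dp_context_cong[OF St n1]) (use H1(2) in auto)
  have "wp (Branch (CNeg 44) dp_leaf dp_inner) m1 (\<lambda>m' t. t \<le> 63 \<and>
      agree_except ({19} \<union> {45..69}) m' m1 \<and> m' 46 = int (dp_at n lbin l w i PW MW x))"
    by (rule dp_value_spec[OF St1 n1 wle x(2) dec]) (use H1 tab n1 in auto)
  then obtain m2 t2 where X2: "exec_com (Branch (CNeg 44) dp_leaf dp_inner) m1 m2 t2" and H2: "t2 \<le> 63"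
      "agree_except ({19} \<union> {45..69}) m2 m1" "m2 46 = int (dp_at n lbin l w i PW MW x)"
    by (rule wpE) blast
  have "m2 9 = int (256 * n)" "m2 30 = int x" "m2 15 = int x" "m2 2 = 1"
    using H1 H2(2) St x unfolding agree_except_def dp_context_def by auto
  then have "wp (SEQ [Basic (Add 69 9 30), Basic (Store 69 46), Basic (Sub 15 15 2)]) m2 (\<lambda>m3 t3.
      t3 = 3 \<and> m3 = m2(69 := int (256 * n + x), 256 * n + x := m2 46, 15 := int x - 1))"
    using n1 by (simp add: wp_Seq wp_Basic nat_int_add[of "256 * n" x, simplified])
  then obtain m3 t3 where X3: "exec_com (SEQ [Basic (Add 69 9 30), Basic (Store 69 46), Basic (Sub 15 15 2)]) m2 m3 t3"
    and H3: "t3 = 3" "m3 = m2(69 := int (256 * n + x), 256 * n + x := m2 46, 15 := int x - 1)"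
    by (rule wpE) blast
  have "exec_com dp_cell m m3 (t1 + (t2 + t3))"
    unfolding dp_cell_def using exec_Seq[OF X1 exec_Seq[OF X2 X3]] by simp
  then show ?thesis
    by (rule wpI) (use H1 H2 H3 n1 in \<open>auto simp: agree_except_def\<close>)
qed

section \<open>Initialisation\<close>

lemma input_mem_header:
  "input_mem n lbin l w i 0 = int n" "input_mem n lbin l w i 1 = int lbin" "input_mem n lbin l w i 2 = int i"
  by (simp_all add: input_mem_def)

lemma input_mem_item:
  assumes "k \<in> {1..n}"
  shows "input_mem n lbin l w i (2 * k + 1) = int (l k)" "input_mem n lbin l w i (2 * k + 2) = int (w k)"
proof -
  have "2 * k + 1 - 3 = 2 * (k - 1)" "2 * k + 2 - 3 = 2 * (k - 1) + 1" using assms by auto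
  then show "input_mem n lbin l w i (2 * k + 1) = int (l k)" "input_mem n lbin l w i (2 * k + 2) = int (w k)"
    unfolding input_mem_def using assms by auto
qed

text \<open>The input occupies the working registers, so the prologue saves \<open>l_bin\<close> and \<open>i\<close> at
  \<open>128 n\<close> and \<open>128 n + 1\<close>, and a copy loop moves the items up by \<open>128 n\<close>.\<close>
definition prologue :: com where
  "prologue = SEQ [Basic (Add 0 0 0), Basic (Add 0 0 0), Basic (Add 0 0 0), Basic (Add 0 0 0),
     Basic (Add 0 0 0), Basic (Add 0 0 0), Basic (Add 0 0 0),
     Basic (Store 0 1), Basic (LoadConst 1 1), Basic (Add 0 0 1), Basic (Store 0 2), Basic (LoadConst 1 1),
     Basic (Sub 0 0 1), Basic (LoadConst 2 64), Basic (Div 1 0 2), Basic (LoadConst 2 2), Basic (Add 1 1 2),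
     Basic (LoadConst 2 3), Basic (Sub 2 1 2)]"

lemma prologue_spec:
  assumes "m0 0 = int n" "m0 1 = int lbin" "m0 2 = int i" "1 \<le> n"
  shows "wp prologue m0 (\<lambda>m t. t \<le> 20 \<and> m 0 = int (128 * n) \<and> m 1 = int (2 * n + 2) \<and> m 2 = int (2 * n) - 1 \<and>
     m (128 * n) = int lbin \<and> m (128 * n + 1) = int i \<and> (\<forall>a. 3 \<le> a \<and> a < 128 * n \<longrightarrow> m a = m0 a))"
proof -
  have e: "nat (128 * int n) = 128 * n" "nat (128 * int n + 1) = 128 * n + 1" "128 * int n div 64 = 2 * int n"
    by simp_all
  show ?thesis unfolding prologue_def using assms by (auto simp: wp_Seq wp_Basic e)
qed

definition copy_step :: com where
  "copy_step = SEQ [Basic (Load 2 1), Basic (Add 0 0 1), Basic (Store 0 2), Basic (Sub 0 0 1),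
     Basic (LoadConst 2 1), Basic (Sub 1 1 2), Basic (LoadConst 2 3), Basic (Sub 2 1 2)]"

definition copy_inv :: "nat \<Rightarrow> nat \<Rightarrow> nat \<Rightarrow> (nat \<Rightarrow> int) \<Rightarrow> nat \<Rightarrow> (nat \<Rightarrow> int) \<Rightarrow> bool" where
  "copy_inv n lbin i m0 j m \<longleftrightarrow> j \<le> 2 * n \<and> m 0 = int (128 * n) \<and> m 1 = int (j + 2) \<and> m 2 = int j - 1 \<and>
     m (128 * n) = int lbin \<and> m (128 * n + 1) = int i \<and> (\<forall>a. 3 \<le> a \<and> a < 128 * n \<longrightarrow> m a = m0 a) \<and>
     (\<forall>a. j + 3 \<le> a \<and> a \<le> 2 * n + 2 \<longrightarrow> m (128 * n + a) = m0 a)"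

lemma copy_step_spec:
  assumes "copy_inv n lbin i m0 (Suc j) m" "1 \<le> n"
  shows "\<not> holds (CNeg 2) m \<and> wp copy_step m (\<lambda>m' t. copy_inv n lbin i m0 j m' \<and> t \<le> 8)"
proof -
  have A: "Suc j \<le> 2 * n" "m 0 = int (128 * n)" "m 1 = int (j + 3)" "m 2 = int j" "m (128 * n) = int lbin"
    "m (128 * n + 1) = int i" "\<forall>a. 3 \<le> a \<and> a < 128 * n \<longrightarrow> m a = m0 a"
    "\<forall>a. j + 4 \<le> a \<and> a \<le> 2 * n + 2 \<longrightarrow> m (128 * n + a) = m0 a"
    using assms(1) unfolding copy_inv_def by auto
  have "m (j + 3) = m0 (j + 3)" using A(1,7) assms(2) by auto
  moreover have e: "nat (128 * int n + (3 + int j)) = 128 * n + (j + 3)" "nat (int j + 3) = j + 3"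
    "nat (128 * int n + (int j + 3)) = 128 * n + (j + 3)" by simp_all
  ultimately show ?thesis unfolding copy_step_def copy_inv_def using A assms(2)
    by (auto simp: wp_Seq wp_Basic e nat_eq_iff)
qed

lemma copy_spec:
  assumes "copy_inv n lbin i m0 (2 * n) m" "1 \<le> n"
  shows "wp (Until (CNeg 2) copy_step) m (\<lambda>m' t. copy_inv n lbin i m0 0 m' \<and> t \<le> 20 * n + 1)"
  by (rule wp_Until[where I = "copy_inv n lbin i m0" and K = 8, OF assms(1)])
    (use copy_step_spec[OF _ assms(2)] in \<open>auto simp: copy_inv_def\<close>)

definition items_stored :: "nat \<Rightarrow> (nat \<Rightarrow> nat) \<Rightarrow> (nat \<Rightarrow> nat) \<Rightarrow> (nat \<Rightarrow> int) \<Rightarrow> bool" where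
  "items_stored n l w m \<longleftrightarrow> (\<forall>k\<in>{1..n}. m (128 * n + 2 * k + 1) = int (l k) \<and> m (128 * n + 2 * k + 2) = int (w k))"

lemma copy_inv_items_stored:
  assumes "copy_inv n lbin i (input_mem n lbin l w i) 0 m"
  shows "items_stored n l w m"
  unfolding items_stored_def
proof
  fix k assume k: "k \<in> {1..n}"
  have "\<forall>a. 3 \<le> a \<and> a \<le> 2 * n + 2 \<longrightarrow> m (128 * n + a) = input_mem n lbin l w i a"
    using assms unfolding copy_inv_def by simp
  then have "m (128 * n + (2 * k + 1)) = int (l k)" "m (128 * n + (2 * k + 2)) = int (w k)"
    using input_mem_item[OF k] k by (auto dest: spec[of _ "2 * k + 1"] spec[of _ "2 * k + 2"])
  then show "m (128 * n + 2 * k + 1) = int (l k) \<and> m (128 * n + 2 * k + 2) = int (w k)"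
    by (simp add: add.assoc)
qed

lemma items_stored_agree_except:
  assumes "items_stored n l w m" "agree_except W m' m" "\<forall>a\<in>W. a < 128" "1 \<le> n"
  shows "items_stored n l w m'"
proof -
  have "128 * n + 2 * k + 1 \<notin> W" "128 * n + 2 * k + 2 \<notin> W" for k using assms(3,4) by force+
  then show ?thesis using assms(1,2) unfolding items_stored_def agree_except_def by auto
qed

definition load_header :: com where
  "load_header = SEQ [Basic (LoadConst 20 128), Basic (Div 3 0 20), Basic (Load 4 0), Basic (LoadConst 20 1),
     Basic (Add 21 0 20), Basic (Load 5 21), Basic (LoadConst 1 0), Basic (LoadConst 2 1)]"

lemma load_header_spec:
  assumes "copy_inv n lbin i m0 0 m" "1 \<le> n"
  shows "wp load_header m (\<lambda>m' t. t = 8 \<and> agree_except {1, 2, 3, 4, 5, 20, 21} m' m \<and> m' 0 = int (128 * n) \<and>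
     m' 1 = 0 \<and> m' 2 = 1 \<and> m' 3 = int n \<and> m' 4 = int lbin \<and> m' 5 = int i)"
proof -
  have A: "m 0 = int (128 * n)" "m (128 * n) = int lbin" "m (128 * n + 1) = int i"
    using assms unfolding copy_inv_def by auto
  have e: "nat (128 * int n) = 128 * n" "nat (128 * int n + 1) = 128 * n + 1" by simp_all
  show ?thesis unfolding load_header_def using A assms(2)
    by (auto simp: wp_Seq wp_Basic e agree_except_def nat_eq_iff)
qed

definition sum_max_step :: com where
  "sum_max_step = SEQ [Basic (Add 24 22 22), Basic (Add 24 24 0), Basic (Add 24 24 2), Basic (Add 24 24 2),
     Basic (Load 25 24), Basic (Add 6 6 25), Basic (Sub 26 7 25), Branch (CNeg 26) (Move 7 25) Skip,
     Basic (Sub 22 22 2), Basic (Sub 23 22 2)]"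

definition sum_max :: com where
  "sum_max = SEQ [Basic (LoadConst 6 0), Basic (LoadConst 7 0), Move 22 3, Basic (Sub 23 22 2),
     Until (CNeg 23) sum_max_step]"

definition sum_max_inv :: "nat \<Rightarrow> (nat \<Rightarrow> nat) \<Rightarrow> (nat \<Rightarrow> int) \<Rightarrow> nat \<Rightarrow> (nat \<Rightarrow> int) \<Rightarrow> bool" where
  "sum_max_inv n w mS j m \<longleftrightarrow> j \<le> n \<and> m 22 = int j \<and> m 23 = int j - 1 \<and> m 6 = int (sum w {j<..n}) \<and>
     m 7 = int (Max (insert 0 (w ` {j<..n}))) \<and> agree_except {6, 7, 19, 22, 23, 24, 25, 26} m mS"

lemma sum_max_step_spec:
  assumes inv: "sum_max_inv n w mS (Suc j) m" and S: "mS 0 = int (128 * n)" "mS 1 = 0" "mS 2 = 1"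
    and items: "items_stored n l w mS" and n1: "1 \<le> n"
  shows "\<not> holds (CNeg 23) m \<and> wp sum_max_step m (\<lambda>m' t. sum_max_inv n w mS j m' \<and> t \<le> 14)"
proof -
  let ?W = "{6, 7, 19, 22, 23, 24, 25, 26} :: nat set"
  have A: "Suc j \<le> n" "m 22 = int (Suc j)" "m 23 = int j" "m 6 = int (sum w {Suc j<..n})"
     "m 7 = int (Max (insert 0 (w ` {Suc j<..n})))" "agree_except ?W m mS"
    using inv unfolding sum_max_inv_def by auto
  have "mS (128 * n + 2 * Suc j + 2) = int (w (Suc j))"
    using items A(1) unfolding items_stored_def by (auto dest: bspec[of _ _ "Suc j"])
  then have R: "m (128 * n + 2 * Suc j + 2) = int (w (Suc j))" "m 0 = int (128 * n)" "m 1 = 0" "m 2 = 1"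
    using A(6) S n1 unfolding agree_except_def by auto
  have e: "nat (4 + (2 * int j + 128 * int n)) = 128 * n + 2 * Suc j + 2" by simp
  have W: "wp sum_max_step m (\<lambda>m' t. t \<le> 14 \<and> agree_except ?W m' m \<and> m' 22 = int j \<and>
      m' 23 = int j - 1 \<and> m' 6 = m 6 + int (w (Suc j)) \<and> m' 7 = max (m 7) (int (w (Suc j))))"
    unfolding sum_max_step_def using A(2,3) R n1
    by (auto simp: wp_Seq wp_Basic wp_Branch agree_except_def max_def e)
  have split: "{j<..n} = insert (Suc j) {Suc j<..n}" using A(1) by auto
  then have "insert 0 (w ` {j<..n}) = insert (w (Suc j)) (insert 0 (w ` {Suc j<..n}))" by auto
  then have max: "Max (insert 0 (w ` {j<..n})) = max (w (Suc j)) (Max (insert 0 (w ` {Suc j<..n})))"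
    by (simp add: Max_insert)
  have sum: "sum w {j<..n} = w (Suc j) + sum w {Suc j<..n}" using split by simp
  have "sum_max_inv n w mS j m'" if H: "agree_except ?W m' m" "m' 22 = int j" "m' 23 = int j - 1"
    "m' 6 = m 6 + int (w (Suc j))" "m' 7 = max (m 7) (int (w (Suc j)))" for m'
  proof -
    have "m' 6 = int (sum w {j<..n})" using H(4) A(4) sum by simp
    moreover have "m' 7 = int (Max (insert 0 (w ` {j<..n})))" using H(5) A(5) max by (simp add: max.commute)
    moreover have "agree_except ?W m' mS" using H(1) A(6) unfolding agree_except_def by auto
    ultimately show ?thesis using H(2,3) A(1) unfolding sum_max_inv_def by auto
  qed
  then show ?thesis using A(3) by (auto intro!: wp_mono[OF W])
qed

lemma sum_max_spec:
  assumes "mS 0 = int (128 * n)" "mS 1 = 0" "mS 2 = 1" "mS 3 = int n" "items_stored n l w mS" "1 \<le> n"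
  shows "wp sum_max mS (\<lambda>m t. sum_max_inv n w mS 0 m \<and> t \<le> 16 * n + 5)"
  unfolding sum_max_def SEQ.simps wp_Seq
  apply (simp add: wp_Basic)
  apply (rule wp_Until[where I = "sum_max_inv n w mS" and k = n and K = 14])
  subgoal using assms unfolding sum_max_inv_def by (auto simp: agree_except_def)
  subgoal unfolding sum_max_inv_def by simp
  subgoal for j m using sum_max_step_spec[of n w mS j m l] assms by blast
  subgoal by simp
  done

definition fact_step :: com where
  "fact_step = SEQ [Basic (Mul 24 24 22), Basic (Add 25 8 22), Basic (Store 25 24), Basic (Add 22 22 2),
     Basic (Sub 23 3 22)]"

definition fact_table :: com where
  "fact_table = SEQ [Basic (LoadConst 20 2), Basic (Div 21 0 20), Basic (Add 8 0 21), Basic (Store 8 2),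
     Move 22 2, Move 24 2, Basic (Sub 23 3 22), Until (CNeg 23) fact_step]"

definition fact_inv :: "nat \<Rightarrow> (nat \<Rightarrow> int) \<Rightarrow> nat \<Rightarrow> (nat \<Rightarrow> int) \<Rightarrow> bool" where
  "fact_inv n mP j m \<longleftrightarrow> j \<le> n \<and> m 22 = int (n + 1 - j) \<and> m 23 = int j - 1 \<and> m 24 = int (fact (n - j)) \<and>
     m 8 = int (192 * n) \<and> (\<forall>t\<le>n - j. m (192 * n + t) = int (fact t)) \<and>
     (\<forall>a. (a < 19 \<and> a \<noteq> 8) \<or> (128 \<le> a \<and> a < 192 * n) \<longrightarrow> m a = mP a)"

lemma fact_step_spec:
  assumes inv: "fact_inv n mP (Suc j) m" and "mP 2 = 1" "mP 3 = int n" and n1: "1 \<le> n"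
  shows "\<not> holds (CNeg 23) m \<and> wp fact_step m (\<lambda>m' t. fact_inv n mP j m' \<and> t \<le> 5)"
proof -
  have A: "Suc j \<le> n" "m 22 = int (n - j)" "m 23 = int j" "m 24 = int (fact (n - Suc j))" "m 8 = int (192 * n)"
    "\<forall>t\<le>n - Suc j. m (192 * n + t) = int (fact t)"
    "\<forall>a. (a < 19 \<and> a \<noteq> 8) \<or> (128 \<le> a \<and> a < 192 * n) \<longrightarrow> m a = mP a"
    using inv unfolding fact_inv_def by auto
  have R: "m 2 = 1" "m 3 = int n" using A(7) assms by auto
  define s where "s = n - j"
  have s: "1 \<le> s" "n - Suc j = s - 1" "n - j = s" "n + 1 - j = s + 1" "int s = int n - int j"
    using A(1) s_def by auto
  have fact_s: "int (fact (s - 1)) * int s = int (fact s)"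
  proof -
    have "fact s = s * fact (s - 1)" using s(1) by (simp add: fact_reduce)
    then show ?thesis by (simp add: mult.commute)
  qed
  define m' where "m' = m(24 := int (fact s), 25 := int (192 * n) + int s, 192 * n + s := int (fact s),
    22 := int s + 1, 23 := int n - (int s + 1))"
  have "nat (192 * int n + int s) = 192 * n + s" by simp
  then have W: "wp fact_step m (\<lambda>m'' t. t = 5 \<and> m'' = m')"
    unfolding fact_step_def m'_def using A(2,4,5) R s fact_s n1 by (simp add: wp_Seq wp_Basic)
  have "m' (192 * n + t) = int (fact t)" if "t \<le> n - j" for t
  proof (cases "t = s")
    case False
    then show ?thesis using that s A(6) n1 unfolding m'_def by auto
  qed (use n1 in \<open>simp add: m'_def\<close>)
  then have "fact_inv n mP j m'" using A s n1 unfolding fact_inv_def m'_def by auto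
  then show ?thesis using A(3) by (auto intro!: wp_mono[OF W])
qed

lemma fact_table_spec:
  assumes "mP 0 = int (128 * n)" "mP 2 = 1" "mP 3 = int n" "1 \<le> n" "mP 1 = 0"
  shows "wp fact_table mP (\<lambda>m t. fact_inv n mP 0 m \<and> t \<le> 7 * n + 8)"
proof -
  have e: "128 * int n div 2 = 64 * int n" "nat (128 * int n + 64 * int n) = 192 * n" "nat (192 * int n) = 192 * n"
    by simp_all
  show ?thesis
    unfolding fact_table_def SEQ.simps wp_Seq
    apply (simp add: wp_Basic assms e)
    apply (rule wp_Until[where I = "fact_inv n mP" and k = n and K = 5])
    subgoal using assms unfolding fact_inv_def by auto
    subgoal unfolding fact_inv_def by simp
    subgoal for j m using fact_step_spec[of n mP j m] assms by blast
    subgoal by simp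
    done
qed

definition dp_init :: com where
  "dp_init = SEQ [Basic (Add 9 0 0), Basic (Add 10 3 2), Basic (Add 11 4 2), Basic (Add 12 6 2),
     Basic (Add 13 7 2), Basic (Mul 14 10 11), Basic (Mul 14 14 12), Basic (Mul 14 14 13),
     Basic (Add 14 14 14), Basic (Add 14 14 14), Basic (Mul 15 10 14), Basic (Sub 15 15 2)]"

lemma dp_init_spec:
  assumes "m 0 = int (128 * n)" "m 2 = 1" "m 3 = int n" "m 4 = int lbin" "m 6 = int PW" "m 7 = int MW"
  shows "wp dp_init m (\<lambda>m' t. t = 12 \<and> agree_except {9, 10, 11, 12, 13, 14, 15} m' m \<and>
    m' 9 = int (256 * n) \<and> m' 10 = int (n + 1) \<and> m' 11 = int (lbin + 1) \<and> m' 12 = int (PW + 1) \<and>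
    m' 13 = int (MW + 1) \<and> m' 14 = int (layer_size n lbin PW MW) \<and>
    m' 15 = int ((n + 1) * layer_size n lbin PW MW) - 1)"
  unfolding dp_init_def layer_size_def using assms
  by (simp add: wp_Seq wp_Basic agree_except_def algebra_simps)

definition load_input :: com where
  "load_input = SEQ [prologue, Until (CNeg 2) copy_step, load_header]"

lemma load_input_spec:
  assumes n1: "1 \<le> n"
  shows "wp load_input (input_mem n lbin l w i) (\<lambda>m t. t \<le> 20 * n + 29 \<and> items_stored n l w m \<and>
     m 0 = int (128 * n) \<and> m 1 = 0 \<and> m 2 = 1 \<and> m 3 = int n \<and> m 4 = int lbin \<and> m 5 = int i)"
proof -
  let ?m0 = "input_mem n lbin l w i"
  obtain m1 t1 where X1: "exec_com prologue ?m0 m1 t1" and H1: "t1 \<le> 20" "m1 0 = int (128 * n)"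
      "m1 1 = int (2 * n + 2)" "m1 2 = int (2 * n) - 1" "m1 (128 * n) = int lbin" "m1 (128 * n + 1) = int i"
      "\<forall>a. 3 \<le> a \<and> a < 128 * n \<longrightarrow> m1 a = ?m0 a"
    using prologue_spec[of ?m0 n lbin i, OF input_mem_header n1] by (elim wpE) blast
  have "copy_inv n lbin i ?m0 (2 * n) m1" using H1 unfolding copy_inv_def by (auto simp: add.commute)
  note copy_spec[OF this n1]
  then obtain m2 t2 where X2: "exec_com (Until (CNeg 2) copy_step) m1 m2 t2"
    and H2: "copy_inv n lbin i ?m0 0 m2" "t2 \<le> 20 * n + 1"
    by (elim wpE) blast
  obtain m3 t3 where X3: "exec_com load_header m2 m3 t3" and H3: "t3 = 8"
      "agree_except {1, 2, 3, 4, 5, 20, 21} m3 m2" "m3 0 = int (128 * n)" "m3 1 = 0" "m3 2 = 1"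
      "m3 3 = int n" "m3 4 = int lbin" "m3 5 = int i"
    using load_header_spec[OF H2(1) n1] by (elim wpE) blast
  have "items_stored n l w m3"
    using items_stored_agree_except[OF copy_inv_items_stored[OF H2(1)] H3(2)] n1 by simp
  moreover have "exec_com load_input ?m0 m3 (t1 + (t2 + t3))"
    unfolding load_input_def SEQ.simps by (rule exec_Seq[OF X1 exec_Seq[OF X2 X3]])
  ultimately show ?thesis using H1(1) H2(2) H3 by (intro wpI) auto
qed

definition initialise :: com where
  "initialise = SEQ [load_input, sum_max, fact_table, dp_init]"

lemma initialise_spec:
  fixes n lbin :: nat and l w :: "nat \<Rightarrow> nat"
  assumes iN: "i \<in> {1..n}"
  defines "PW \<equiv> sum w {1..n}" and "MW \<equiv> Max (insert 0 (w ` {1..n}))"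
  shows "wp initialise (input_mem n lbin l w i) (\<lambda>m t. dp_context n lbin l w i PW MW m \<and>
     m 15 = int ((n + 1) * layer_size n lbin PW MW) - 1 \<and> t \<le> 54 + 43 * n)"
proof -
  have n1: "1 \<le> n" using iN by simp
  obtain m3 t3 where X3: "exec_com load_input (input_mem n lbin l w i) m3 t3" and H3: "t3 \<le> 20 * n + 29"
      "items_stored n l w m3" "m3 0 = int (128 * n)" "m3 1 = 0" "m3 2 = 1"
      "m3 3 = int n" "m3 4 = int lbin" "m3 5 = int i"
    using load_input_spec[OF n1, of lbin l w i] by (elim wpE) blast
  note items3 = H3(2)
  obtain m4 t4 where X4: "exec_com sum_max m3 m4 t4" and H4: "sum_max_inv n w m3 0 m4" "t4 \<le> 16 * n + 5"
    using sum_max_spec[OF H3(3,4,5,6) items3 n1] by (elim wpE) blast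
  have "{0<..n} = {1..n}" by auto
  then have H4': "m4 6 = int PW" "m4 7 = int MW" "agree_except {6, 7, 19, 22, 23, 24, 25, 26} m4 m3"
    using H4(1) unfolding sum_max_inv_def PW_def MW_def by auto
  then have R4: "m4 0 = int (128 * n)" "m4 1 = 0" "m4 2 = 1" "m4 3 = int n" "m4 4 = int lbin" "m4 5 = int i"
    and items4: "items_stored n l w m4"
    using H3(3-8) items_stored_agree_except[OF items3 H4'(3)] n1 unfolding agree_except_def by auto
  obtain m5 t5 where X5: "exec_com fact_table m4 m5 t5" and H5: "fact_inv n m4 0 m5" "t5 \<le> 7 * n + 8"
    using fact_table_spec[OF R4(1,3,4) n1 R4(2)] by (elim wpE) blast
  have F5: "m5 8 = int (192 * n)" "\<forall>t\<le>n. m5 (192 * n + t) = int (fact t)"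
    "\<forall>a. (a < 19 \<and> a \<noteq> 8) \<or> (128 \<le> a \<and> a < 192 * n) \<longrightarrow> m5 a = m4 a"
    using H5 unfolding fact_inv_def by auto
  have R5: "m5 0 = int (128 * n)" "m5 2 = 1" "m5 3 = int n" "m5 4 = int lbin" "m5 6 = int PW" "m5 7 = int MW"
    using F5(3) R4 H4'(1,2) by auto
  obtain m6 t6 where X6: "exec_com dp_init m5 m6 t6" and H6: "t6 = 12"
      "agree_except {9, 10, 11, 12, 13, 14, 15} m6 m5" "m6 9 = int (256 * n)" "m6 10 = int (n + 1)"
      "m6 11 = int (lbin + 1)" "m6 12 = int (PW + 1)" "m6 13 = int (MW + 1)"
      "m6 14 = int (layer_size n lbin PW MW)" "m6 15 = int ((n + 1) * layer_size n lbin PW MW) - 1"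
    using dp_init_spec[OF R5] by (elim wpE) blast
  have m6: "m6 a = m5 a" if "a \<notin> {9, 10, 11, 12, 13, 14, 15}" for a
    using H6(2) that unfolding agree_except_def by blast
  have "m6 (128 * n + 2 * k + 1) = int (l k) \<and> m6 (128 * n + 2 * k + 2) = int (w k)" if "k \<in> {1..n}" for k
  proof -
    have "128 * n + 2 * k + 2 < 192 * n" "128 \<le> 128 * n + 2 * k + 1" using that n1 by auto
    then show ?thesis using items4 that m6 F5(3) unfolding items_stored_def by auto
  qed
  moreover have "m6 a = m4 a" if "a < 8" for a using that m6 F5(3) by auto
  ultimately have "dp_context n lbin l w i PW MW m6"
    using H6(3-9) F5(1,2) m6 R4 H4'(1,2) n1 unfolding dp_context_def by auto
  moreover have "exec_com initialise (input_mem n lbin l w i) m6 (t3 + (t4 + (t5 + t6)))"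
    unfolding initialise_def SEQ.simps by (rule exec_Seq[OF X3 exec_Seq[OF X4 exec_Seq[OF X5 X6]]])
  ultimately show ?thesis using H3(1) H4(2) H5(2) H6(1,9) by (intro wpI) auto
qed

section \<open>Filling the table and reading off the Shapley value\<close>

definition dp_inv :: "nat \<Rightarrow> nat \<Rightarrow> (nat \<Rightarrow> nat) \<Rightarrow> (nat \<Rightarrow> nat) \<Rightarrow> nat \<Rightarrow> nat \<Rightarrow> nat \<Rightarrow> (nat \<Rightarrow> int) \<Rightarrow> nat \<Rightarrow> (nat \<Rightarrow> int) \<Rightarrow> bool" where
  "dp_inv n lbin l w i PW MW mD j m \<longleftrightarrow> j \<le> (n + 1) * layer_size n lbin PW MW \<and> m 15 = int j - 1 \<and>
     (\<forall>a. (a < 19 \<and> a \<noteq> 15) \<or> (128 \<le> a \<and> a < 256 * n) \<longrightarrow> m a = mD a) \<and>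
     (\<forall>y. j \<le> y \<and> y < (n + 1) * layer_size n lbin PW MW \<longrightarrow>
        m (256 * n + y) = int (dp_at n lbin l w i PW MW y))"

lemma dp_loop_step_spec:
  assumes inv: "dp_inv n lbin l w i PW MW mD (Suc j) m" and St: "dp_context n lbin l w i PW MW mD"
    and n1: "1 \<le> n" and wle: "\<forall>k\<in>{1..n}. w k \<le> MW"
  shows "\<not> holds (CNeg 15) m \<and> wp dp_cell m (\<lambda>m' t. dp_inv n lbin l w i PW MW mD j m' \<and> t \<le> 100)"
proof -
  have A: "Suc j \<le> (n + 1) * layer_size n lbin PW MW" "m 15 = int j"
    "\<forall>a. (a < 19 \<and> a \<noteq> 15) \<or> (128 \<le> a \<and> a < 256 * n) \<longrightarrow> m a = mD a"
    "\<forall>y. Suc j \<le> y \<and> y < (n + 1) * layer_size n lbin PW MW \<longrightarrow>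
       m (256 * n + y) = int (dp_at n lbin l w i PW MW y)"
    using inv unfolding dp_inv_def by auto
  have "dp_context n lbin l w i PW MW m" by (rule dp_context_cong[OF St n1 A(3)])
  then have "wp dp_cell m (\<lambda>m' t. t \<le> 100 \<and> m' 15 = int j - 1 \<and>
     m' (256 * n + j) = int (dp_at n lbin l w i PW MW j) \<and>
     (\<forall>a. (a < 19 \<and> a \<noteq> 15) \<or> (128 \<le> a \<and> a \<noteq> 256 * n + j) \<longrightarrow> m' a = m a))"
    by (rule dp_cell_spec[of n lbin l w i PW MW m j, OF _ n1 wle A(2)]) (use A(1,4) in auto)
  moreover have "dp_inv n lbin l w i PW MW mD j m'"
    if H: "m' 15 = int j - 1" "m' (256 * n + j) = int (dp_at n lbin l w i PW MW j)"
      "\<forall>a. (a < 19 \<and> a \<noteq> 15) \<or> (128 \<le> a \<and> a \<noteq> 256 * n + j) \<longrightarrow> m' a = m a" for m'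
  proof -
    have "m' a = mD a" if "(a < 19 \<and> a \<noteq> 15) \<or> (128 \<le> a \<and> a < 256 * n)" for a
      using H(3) A(3) that by auto
    moreover have "m' (256 * n + y) = int (dp_at n lbin l w i PW MW y)"
      if "j \<le> y" "y < (n + 1) * layer_size n lbin PW MW" for y
    proof (cases "y = j")
      case False
      then show ?thesis using H(3) A(4) that n1 by auto
    qed (use H(2) in simp)
    ultimately show ?thesis using H(1) A(1) unfolding dp_inv_def by auto
  qed
  ultimately show ?thesis using A(2) by (auto elim!: wp_mono)
qed

lemma dp_loop_spec:
  assumes "dp_context n lbin l w i PW MW mD" "1 \<le> n" "\<forall>k\<in>{1..n}. w k \<le> MW"
    "mD 15 = int ((n + 1) * layer_size n lbin PW MW) - 1"
  shows "wp (Until (CNeg 15) dp_cell) mD (\<lambda>m t. dp_inv n lbin l w i PW MW mD 0 m \<and>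
     t \<le> 102 * ((n + 1) * layer_size n lbin PW MW) + 1)"
  apply (rule wp_Until[where I = "dp_inv n lbin l w i PW MW mD" and k = "(n + 1) * layer_size n lbin PW MW" and K = 100])
  subgoal using assms unfolding dp_inv_def by auto
  subgoal unfolding dp_inv_def by simp
  subgoal for j m using dp_loop_step_spec[of n lbin l w i PW MW mD j m] assms by blast
  subgoal by simp
  done

definition output_addr :: com where
  "output_addr = SEQ [Basic (Mul 30 4 12), Basic (Mul 30 30 13), Basic (Add 30 30 30), Basic (Add 30 30 30),
     Basic (Add 30 30 9)]"

definition write_output :: com where
  "write_output = SEQ [Basic (Load 31 30), Basic (Add 30 30 2), Basic (Load 32 30), Basic (Add 33 8 3),
     Basic (Load 1 33), Basic (Sub 0 32 31)]"

lemma output_addr_spec: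
  assumes "m 4 = int lbin" "m 9 = int (256 * n)" "m 12 = int (PW + 1)" "m 13 = int (MW + 1)"
  shows "wp output_addr m (\<lambda>m' t. t = 5 \<and> m' 30 = int (256 * n + lbin * (PW + 1) * (MW + 1) * 4) \<and>
     agree_except {30} m' m)"
  unfolding output_addr_def using assms by (simp add: wp_Seq wp_Basic agree_except_def algebra_simps)

lemma write_output_spec:
  assumes "m 30 = int A" "m 2 = 1" "m 3 = int n" "m 8 = int Fb" "m (Fb + n) = int (fact n)" "128 \<le> A" "128 \<le> Fb"
    "m A = int R0" "m (Suc A) = int R1"
  shows "wp write_output m (\<lambda>m' t. t = 6 \<and> m' 1 = int (fact n) \<and> m' 0 = int R1 - int R0)"
proof -
  have e: "nat (int Fb + int n) = Fb + n" "nat (int A + 1) = Suc A" by simp_all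
  show ?thesis unfolding write_output_def using assms by (simp add: wp_Seq wp_Basic e)
qed

lemma output_cells:
  fixes n lbin PW MW :: nat
  defines "y \<equiv> lbin * (PW + 1) * (MW + 1) * 4"
  assumes "md < 2"
  shows "y + md < (n + 1) * layer_size n lbin PW MW"
    and "dp_at n lbin l w i PW MW (y + md) = shapley_dp n l w i PW n 0 (lbin, 0, 0, 0) md"
proof -
  have "y + md < (lbin + 1) * (PW + 1) * (MW + 1) * 4" using assms(2) unfolding y_def by (simp add: algebra_simps)
  also have "\<dots> \<le> (n + 1) * (n + 1) * ((lbin + 1) * (PW + 1) * (MW + 1) * 4)"
    using mult_le_mono1[of 1 "(n + 1) * (n + 1)" "(lbin + 1) * (PW + 1) * (MW + 1) * 4"] by simp
  also have "\<dots> = (n + 1) * layer_size n lbin PW MW" by (simp only: layer_size_def mult.assoc)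
  finally show "y + md < (n + 1) * layer_size n lbin PW MW" .
  have "y + md = encode_state (MW + 1) (PW + 1) (lbin + 1) (n + 1) (0, 0, lbin, 0, 0, 0, md)"
    unfolding y_def by simp
  then show "dp_at n lbin l w i PW MW (y + md) = shapley_dp n l w i PW n 0 (lbin, 0, 0, 0) md"
    using dp_at_encode[of 0 n lbin lbin 0 PW 0 MW 0 md l w i 0] assms(2) by simp
qed

definition finish :: com where
  "finish = Seq output_addr write_output"

lemma finish_spec:
  assumes St: "dp_context n lbin l w i PW MW m" and n1: "1 \<le> n"
    and tab: "\<forall>y. y < (n + 1) * layer_size n lbin PW MW \<longrightarrow> m (256 * n + y) = int (dp_at n lbin l w i PW MW y)"
  shows "wp finish m (\<lambda>m' t. t = 11 \<and> m' 1 = int (fact n) \<and>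
     m' 0 = int (shapley_dp n l w i PW n 0 (lbin, 0, 0, 0) 1) - int (shapley_dp n l w i PW n 0 (lbin, 0, 0, 0) 0))"
proof -
  let ?y = "lbin * (PW + 1) * (MW + 1) * 4"
  have S: "m 2 = 1" "m 3 = int n" "m 4 = int lbin" "m 8 = int (192 * n)" "m 9 = int (256 * n)"
    "m 12 = int (PW + 1)" "m 13 = int (MW + 1)" "m (192 * n + n) = int (fact n)"
    using St unfolding dp_context_def by auto
  have cell: "m (256 * n + (?y + md)) = int (shapley_dp n l w i PW n 0 (lbin, 0, 0, 0) md)" if "md < 2" for md
    using tab output_cells[where n = n and lbin = lbin and PW = PW and MW = MW, OF that] by simp
  have T: "m (256 * n + ?y) = int (shapley_dp n l w i PW n 0 (lbin, 0, 0, 0) 0)"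
    "m (Suc (256 * n + ?y)) = int (shapley_dp n l w i PW n 0 (lbin, 0, 0, 0) 1)"
    using cell[of 0] cell[of 1] by simp_all
  obtain m1 t1 where X1: "exec_com output_addr m m1 t1"
    and H1: "t1 = 5" "m1 30 = int (256 * n + ?y)" "agree_except {30} m1 m"
    using output_addr_spec[OF S(3,5,6,7)] by (elim wpE) blast
  have "wp write_output m1 (\<lambda>m' t. t = 6 \<and> m' 1 = int (fact n) \<and>
     m' 0 = int (shapley_dp n l w i PW n 0 (lbin, 0, 0, 0) 1) - int (shapley_dp n l w i PW n 0 (lbin, 0, 0, 0) 0))"
    by (rule write_output_spec[where A = "256 * n + ?y" and Fb = "192 * n"])
      (use H1 S T n1 in \<open>auto simp: agree_except_def\<close>)
  then obtain m2 t2 where "exec_com write_output m1 m2 t2" "t2 = 6" "m2 1 = int (fact n)"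
    "m2 0 = int (shapley_dp n l w i PW n 0 (lbin, 0, 0, 0) 1) - int (shapley_dp n l w i PW n 0 (lbin, 0, 0, 0) 0)"
    by (elim wpE) blast
  then show ?thesis unfolding finish_def using exec_Seq[OF X1] H1(1) by (intro wpI) auto
qed

definition shapley_program :: com where
  "shapley_program = SEQ [initialise, Until (CNeg 15) dp_cell, finish]"

theorem shapley_program_spec:
  fixes n lbin :: nat and l w :: "nat \<Rightarrow> nat"
  assumes iN: "i \<in> {1..n}"
  defines "PW \<equiv> sum w {1..n}" and "MW \<equiv> Max (insert 0 (w ` {1..n}))"
  shows "wp shapley_program (input_mem n lbin l w i) (\<lambda>m t. m 1 = int (fact n) \<and>
     m 0 = int (shapley_dp n l w i PW n 0 (lbin, 0, 0, 0) 1) - int (shapley_dp n l w i PW n 0 (lbin, 0, 0, 0) 0) \<and>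
     t \<le> 65 + 43 * n + 102 * ((n + 1) * layer_size n lbin PW MW) + 1)"
proof -
  have n1: "1 \<le> n" using iN by simp
  have wle: "\<forall>k\<in>{1..n}. w k \<le> MW" unfolding MW_def by (auto intro: Max_ge)
  obtain m1 t1 where X1: "exec_com initialise (input_mem n lbin l w i) m1 t1"
    and St: "dp_context n lbin l w i PW MW m1" "m1 15 = int ((n + 1) * layer_size n lbin PW MW) - 1"
    and T1: "t1 \<le> 54 + 43 * n"
    using initialise_spec[OF iN, of lbin l w] unfolding PW_def MW_def by (elim wpE) blast
  obtain m2 t2 where X2: "exec_com (Until (CNeg 15) dp_cell) m1 m2 t2" and H2: "dp_inv n lbin l w i PW MW m1 0 m2"
    and T2: "t2 \<le> 102 * ((n + 1) * layer_size n lbin PW MW) + 1"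
    using dp_loop_spec[OF St(1) n1 wle St(2)] by (elim wpE) blast
  have St2: "dp_context n lbin l w i PW MW m2" by (rule dp_context_cong[OF St(1) n1]) (use H2 in \<open>auto simp: dp_inv_def\<close>)
  have tab2: "\<forall>y. y < (n + 1) * layer_size n lbin PW MW \<longrightarrow> m2 (256 * n + y) = int (dp_at n lbin l w i PW MW y)"
    using H2 unfolding dp_inv_def by auto
  obtain m3 t3 where X3: "exec_com finish m2 m3 t3" and H3: "t3 = 11" "m3 1 = int (fact n)"
    "m3 0 = int (shapley_dp n l w i PW n 0 (lbin, 0, 0, 0) 1) - int (shapley_dp n l w i PW n 0 (lbin, 0, 0, 0) 0)"
    using finish_spec[OF St2 n1 tab2] by (elim wpE) blast
  have "exec_com shapley_program (input_mem n lbin l w i) m3 (t1 + (t2 + t3))"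
    unfolding shapley_program_def SEQ.simps by (rule exec_Seq[OF X1 exec_Seq[OF X2 X3]])
  then show ?thesis by (rule wpI) (use H3 T1 T2 in auto)
qed

section \<open>Running time\<close>

lemma weight_le_wmax:
  assumes "\<forall>k\<in>{1..n}. 0 < l k \<and> l k \<le> lbin" "k \<in> {1..n}"
  shows "w k \<le> wmax n l w lbin"
proof -
  let ?r = "\<lambda>k. real (w k) / real (l k)"
  have lk: "0 < l k" "l k \<le> lbin" using assms by auto
  have "real (w k) = real (l k) * ?r k" using lk by simp
  also have "\<dots> \<le> real lbin * ?r k" using lk by (intro mult_right_mono) auto
  also have "\<dots> \<le> real lbin * Max (?r ` {1..n})" using assms(2) by (intro mult_left_mono Max_ge) auto
  also have "\<dots> \<le> real_of_int \<lceil>real lbin * Max (?r ` {1..n})\<rceil>" by (rule le_of_int_ceiling)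
  finally show ?thesis unfolding wmax_def by linarith
qed

lemma table_size_bound:
  fixes n lbin W PW MW :: nat
  assumes "1 \<le> n" "1 \<le> lbin" "1 \<le> W" "PW \<le> n * W" "MW \<le> W"
  shows "(n + 1) * layer_size n lbin PW MW \<le> 128 * (n ^ 3 * lbin * W ^ 2)"
proof -
  have "1 \<le> n * W" using assms by simp
  have "(n + 1) * layer_size n lbin PW MW = (n + 1) * (n + 1) * (lbin + 1) * (PW + 1) * (MW + 1) * 4"
    by (simp only: layer_size_def mult.assoc)
  also have "\<dots> \<le> (2 * n) * (2 * n) * (2 * lbin) * (2 * (n * W)) * (2 * W) * 4"
    using assms \<open>1 \<le> n * W\<close> by (intro mult_le_mono) linarith+
  also have "\<dots> = 128 * (n ^ 3 * lbin * W ^ 2)" by (simp add: power2_eq_square power3_eq_cube algebra_simps)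
  finally show ?thesis .
qed

lemma running_time_bound:
  fixes n lbin W PW MW :: nat
  assumes "1 \<le> n" "1 \<le> lbin" "1 \<le> W" "PW \<le> n * W" "MW \<le> W"
  shows "66 + 43 * n + 102 * ((n + 1) * layer_size n lbin PW MW) \<le> 20000 * lbin ^ 5 * W ^ 5 * n ^ 8"
proof -
  define X where "X = lbin ^ 5 * W ^ 5 * n ^ 8"
  have pow: "n ^ 1 \<le> n ^ 8" "n ^ 3 \<le> n ^ 8" "lbin ^ 1 \<le> lbin ^ 5" "W ^ 2 \<le> W ^ 5"
    using assms(1-3) by (intro power_increasing; simp)+
  have one: "1 \<le> lbin ^ 5" "1 \<le> W ^ 5" using assms(2,3) by simp_all
  have "n = 1 * 1 * n ^ 1" by simp
  also have "\<dots> \<le> X" unfolding X_def using one pow by (intro mult_le_mono) auto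
  finally have Xn: "n \<le> X" .
  have "n ^ 3 * lbin * W ^ 2 = lbin ^ 1 * W ^ 2 * n ^ 3" by simp
  also have "\<dots> \<le> X" unfolding X_def using pow by (intro mult_le_mono) auto
  finally have "66 + 43 * n + 102 * ((n + 1) * layer_size n lbin PW MW) \<le> 20000 * X"
    using Xn table_size_bound[OF assms] assms(1) by linarith
  then show ?thesis unfolding X_def by (simp add: mult.assoc)
qed

theorem theorem4:
  "\<exists>(P :: instr list) (c :: nat). \<forall>n lbin (l :: nat \<Rightarrow> nat) (w :: nat \<Rightarrow> nat) i.
     (\<forall>k\<in>{1..n}. 0 < l k \<and> l k \<le> lbin) \<longrightarrow>
     (\<forall>j\<in>{1..n}. \<forall>k\<in>{1..n}. j \<le> k \<longrightarrow> real (w j) / real (l j) \<ge> real (w k) / real (l k)) \<longrightarrow>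
     i \<in> {1..n} \<longrightarrow>
     (\<exists>m. runs_within P (input_mem n lbin l w i)
              (c * lbin ^ 5 * (max 1 (wmax n l w lbin)) ^ 5 * n ^ 8) m
          \<and> outputs m (shapley {1..n} (greedy_game l w lbin) i))"
proof (intro exI[of _ "compile 0 shapley_program"] exI[of _ 20000] allI impI)
  fix n lbin i :: nat and l w :: "nat \<Rightarrow> nat"
  assume L: "\<forall>k\<in>{1..n}. 0 < l k \<and> l k \<le> lbin"
    and "\<forall>j\<in>{1..n}. \<forall>k\<in>{1..n}. j \<le> k \<longrightarrow> real (w j) / real (l j) \<ge> real (w k) / real (l k)"
    and iN: "i \<in> {1..n}"
  define W where "W = max 1 (wmax n l w lbin)"
  have wk: "k \<in> {1..n} \<Longrightarrow> w k \<le> W" for k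
    using weight_le_wmax[OF L, of k w] unfolding W_def by (simp add: le_max_iff_disj)
  have "1 \<le> lbin" using L iN by fastforce
  moreover have "sum w {1..n} \<le> n * W" using sum_mono[of "{1..n}" w "\<lambda>_. W"] wk by simp
  moreover have "Max (insert 0 (w ` {1..n})) \<le> W" using wk by simp
  ultimately have time: "66 + 43 * n + 102 * ((n + 1) * layer_size n lbin (sum w {1..n}) (Max (insert 0 (w ` {1..n}))))
      \<le> 20000 * lbin ^ 5 * W ^ 5 * n ^ 8"
    using iN by (intro running_time_bound) (auto simp: W_def)
  obtain m t where X: "exec_com shapley_program (input_mem n lbin l w i) m t"
    and m: "m 1 = int (fact n)"
      "m 0 = int (shapley_dp n l w i (sum w {1..n}) n 0 (lbin, 0, 0, 0) 1) - int (shapley_dp n l w i (sum w {1..n}) n 0 (lbin, 0, 0, 0) 0)"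
    and "t \<le> 66 + 43 * n + 102 * ((n + 1) * layer_size n lbin (sum w {1..n}) (Max (insert 0 (w ` {1..n}))))"
    using shapley_program_spec[OF iN, of lbin l w] by (elim wpE) auto
  with time have "runs_within (compile 0 shapley_program) (input_mem n lbin l w i) (20000 * lbin ^ 5 * W ^ 5 * n ^ 8) m"
    by (intro runs_within_compile[OF X]) simp
  moreover have "outputs m (shapley {1..n} (greedy_game l w lbin) i)"
    using m shapley_dp_difference[OF iN, of l w lbin] unfolding outputs_def
    by (simp add: field_simps)
  ultimately show "\<exists>m. runs_within (compile 0 shapley_program) (input_mem n lbin l w i)
      (20000 * lbin ^ 5 * (max 1 (wmax n l w lbin)) ^ 5 * n ^ 8) m \<and> outputs m (shapley {1..n} (greedy_game l w lbin) i)"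
    unfolding W_def by blast
qed

end
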